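(* Let $\mathbb{L}$ be a complete, algebraically closed non-Archimedean field of characteristic $0$ and let $\phi$ be a rational map over $\mathbb{L}$ of degree $\geq 2$ having good reduction. Let $\xi\neq\zeta_{Gauss}$ be a fixed point of $\phi$ in $\mathbb{P}^1_{an}$ which is totally ramified for $\phi$, and let $\vec v$ be the direction at $\zeta_{Gauss}$ containing $\xi$, with corresponding open Berkovich disk $B_{\vec v}$. Then $\xi$ is of type $1$, and $\xi$ is the unique fixed point of $\phi$ in $B_{\vec v}$.
   Context: $\mathbb{P}^1_{an}$ is the Berkovich projective line over $\mathbb{L}$; $\zeta_{Gauss}$ is the type $2$ point corresponding to the closed unit disk $D(0,1)$; type $1$ points are the points of $\mathbb{P}^1(\mathbb{L})$. Directions at $\zeta_{Gauss}$ are the connected components of $\mathbb{P}^1_{an}\setminus\{\zeta_{Gauss}\}$ (open Berkovich disks $B_{\vec v}$). Good reduction: a normalized form of $\phi$ (coprime numerator/denominator, coefficients in the valuation ring, not all in the maximal ideal) reduces modulo the maximal ideal to a map of the same degree. A point $\zeta$ is totally ramified for $\phi$ if the multiplicity (local degree) $m_\phi(\zeta)$ equals $\deg\phi$. *)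

theory Defs
  imports "HOL-Analysis.Analysis" "HOL-Computational_Algebra.Polynomial"
begin

definition nonarch_abs :: "('a::field \<Rightarrow> real) \<Rightarrow> bool" where
  "nonarch_abs absv \<longleftrightarrow>
     (\<forall>x. absv x \<ge> 0) \<and> (\<forall>x. absv x = 0 \<longleftrightarrow> x = 0) \<and>
     (\<forall>x y. absv (x * y) = absv x * absv y) \<and>
     (\<forall>x y. absv (x + y) \<le> max (absv x) (absv y))"

definition nontrivial_abs :: "('a::field \<Rightarrow> real) \<Rightarrow> bool" where
  "nontrivial_abs absv \<longleftrightarrow> (\<exists>x. absv x \<noteq> 0 \<and> absv x \<noteq> 1)"

definition complete_abs :: "('a::field \<Rightarrow> real) \<Rightarrow> bool" where
  "complete_abs absv \<longleftrightarrow>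
     (\<forall>X::nat \<Rightarrow> 'a. (\<forall>e>0. \<exists>N. \<forall>m\<ge>N. \<forall>n\<ge>N. absv (X m - X n) < e)
        \<longrightarrow> (\<exists>L. \<forall>e>0. \<exists>N. \<forall>n\<ge>N. absv (X n - L) < e))"

definition alg_closed :: "'a::field itself \<Rightarrow> bool" where
  "alg_closed _ \<longleftrightarrow> (\<forall>p::'a poly. degree p \<ge> 1 \<longrightarrow> (\<exists>x. poly p x = 0))"

definition CANA_field :: "('a::field \<Rightarrow> real) \<Rightarrow> bool" where
  "CANA_field absv \<longleftrightarrow> nonarch_abs absv \<and> nontrivial_abs absv \<and> complete_abs absv
     \<and> alg_closed TYPE('a)"

type_synonym 'a seminorm = "'a poly \<Rightarrow> real"

definition berkA1 :: "('a::field \<Rightarrow> real) \<Rightarrow> 'a seminorm set" where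
  "berkA1 absv = {s. (\<forall>f. s f \<ge> 0) \<and> (\<forall>c. s [:c:] = absv c) \<and>
                     (\<forall>f g. s (f * g) = s f * s g) \<and> (\<forall>f g. s (f + g) \<le> s f + s g)}"

text \<open>Weak (Gelfand) topology on the Berkovich affine line: the coarsest topology making
  all evaluations s \<mapsto> s f continuous.\<close>
definition berkA1_top :: "('a::field \<Rightarrow> real) \<Rightarrow> 'a seminorm topology" where
  "berkA1_top absv = topology (arbitrary union_of
      (finite intersection_of (\<lambda>S. \<exists>f a b. S = {s. a < s f \<and> s f < b})
        relative_to berkA1 absv))"

text \<open>Berkovich projective line: Some s for points of the affine line, None for infinity.\<close>
definition berkP1 :: "('a::field \<Rightarrow> real) \<Rightarrow> 'a seminorm option set" where
  "berkP1 absv = Some ` berkA1 absv \<union> {None}"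

text \<open>Topology of the one-point compactification of the Berkovich affine line.\<close>
definition berkP1_top :: "('a::field \<Rightarrow> real) \<Rightarrow> 'a seminorm option topology" where
  "berkP1_top absv = topology (\<lambda>U. U \<subseteq> berkP1 absv \<and>
      openin (berkA1_top absv) {s. Some s \<in> U} \<and>
      (None \<in> U \<longrightarrow> compactin (berkA1_top absv) (berkA1 absv - {s. Some s \<in> U})))"

definition type1_pt :: "('a::field \<Rightarrow> real) \<Rightarrow> 'a \<Rightarrow> 'a seminorm option" where
  "type1_pt absv a = Some (\<lambda>f. absv (poly f a))"

definition is_type1 :: "('a::field \<Rightarrow> real) \<Rightarrow> 'a seminorm option \<Rightarrow> bool" where
  "is_type1 absv \<xi> \<longleftrightarrow> \<xi> = None \<or> (\<exists>a. \<xi> = type1_pt absv a)"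

text \<open>The Gauss point, corresponding to the closed unit disk D(0,1).\<close>
definition gauss_pt :: "('a::field \<Rightarrow> real) \<Rightarrow> 'a seminorm option" where
  "gauss_pt absv = Some (\<lambda>f. Max {absv (coeff f i) | i. i \<le> degree f})"

text \<open>Directions at a point zeta: connected components of P^1_an minus zeta;
  dir_disk absv zeta xi is the component containing xi.\<close>
definition dir_disk :: "('a::field \<Rightarrow> real) \<Rightarrow> 'a seminorm option \<Rightarrow> 'a seminorm option
    \<Rightarrow> 'a seminorm option set" where
  "dir_disk absv \<zeta> \<xi> = {\<eta>. connected_component_of
      (subtopology (berkP1_top absv) (topspace (berkP1_top absv) - {\<zeta>})) \<xi> \<eta>}"

definition rdeg :: "'a::field poly \<Rightarrow> 'a poly \<Rightarrow> nat" where
  "rdeg P Q = max (degree P) (degree Q)"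

text \<open>Q^(deg h) * h(P/Q), a polynomial.\<close>
definition hsubst :: "'a::field poly \<Rightarrow> 'a poly \<Rightarrow> 'a poly \<Rightarrow> 'a poly" where
  "hsubst P Q h = (\<Sum>i\<le>degree h. smult (coeff h i) (P ^ i * Q ^ (degree h - i)))"

text \<open>Action of phi = P/Q on the Berkovich projective line:
  [h]_{phi(zeta)} = [h o phi]_zeta.\<close>
definition phi_act :: "'a::field poly \<Rightarrow> 'a poly \<Rightarrow> ('a \<Rightarrow> real) \<Rightarrow>
    'a seminorm option \<Rightarrow> 'a seminorm option" where
  "phi_act P Q absv \<zeta> = (case \<zeta> of
      None \<Rightarrow> (if degree P > degree Q then None
               else type1_pt absv (if degree P = degree Q then lead_coeff P / lead_coeff Q else 0))
    | Some s \<Rightarrow> (if s Q = 0 then None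
               else Some (\<lambda>h. s (hsubst P Q h) / (s Q) ^ degree h)))"

text \<open>Number of solutions (with multiplicity) of phi(z) = b, for b in L, among type 1
  points lying in U (infinity is a solution of multiplicity deg phi - deg(P - bQ)).\<close>
definition cnt_pre :: "'a::field poly \<Rightarrow> 'a poly \<Rightarrow> ('a \<Rightarrow> real) \<Rightarrow>
    'a seminorm option set \<Rightarrow> 'a \<Rightarrow> nat" where
  "cnt_pre P Q absv U b =
     (\<Sum>a\<in>{a. poly (P - smult b Q) a = 0 \<and> type1_pt absv a \<in> U}. order a (P - smult b Q))
     + (if None \<in> U then rdeg P Q - degree (P - smult b Q) else 0)"

text \<open>Multiplicity (local degree) m_phi(zeta): for all sufficiently small neighbourhoods U of
  zeta, every point has at most m_phi(zeta) preimages in U, and this is attained.\<close>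
definition loc_mult :: "'a::field poly \<Rightarrow> 'a poly \<Rightarrow> ('a \<Rightarrow> real) \<Rightarrow>
    'a seminorm option \<Rightarrow> nat" where
  "loc_mult P Q absv \<zeta> =
     (INF U \<in> {U. openin (berkP1_top absv) U \<and> \<zeta> \<in> U}. SUP b. cnt_pre P Q absv U b)"

definition totally_ramified :: "'a::field poly \<Rightarrow> 'a poly \<Rightarrow> ('a \<Rightarrow> real) \<Rightarrow>
    'a seminorm option \<Rightarrow> bool" where
  "totally_ramified P Q absv \<zeta> \<longleftrightarrow> loc_mult P Q absv \<zeta> = rdeg P Q"

definition hom_eval :: "'a::field poly \<Rightarrow> nat \<Rightarrow> 'a \<Rightarrow> 'a \<Rightarrow> 'a" where
  "hom_eval P d x y = (\<Sum>i\<le>d. coeff P i * x ^ i * y ^ (d - i))"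

definition normalized_form :: "('a::field \<Rightarrow> real) \<Rightarrow> 'a poly \<Rightarrow> 'a poly \<Rightarrow> bool" where
  "normalized_form absv P Q \<longleftrightarrow>
     (\<forall>i. absv (coeff P i) \<le> 1 \<and> absv (coeff Q i) \<le> 1) \<and>
     (\<exists>i. absv (coeff P i) = 1 \<or> absv (coeff Q i) = 1)"

text \<open>The reduced map [P~ : Q~] has degree d = deg phi iff the reductions of the
  degree-d homogeneous forms have no common zero on P^1 of the residue field; residue
  points are represented by lifts (x,y) with max(|x|,|y|) = 1, and a reduction vanishes
  iff the value has absolute value < 1.\<close>
definition good_reduction :: "('a::field \<Rightarrow> real) \<Rightarrow> 'a poly \<Rightarrow> 'a poly \<Rightarrow> bool" where
  "good_reduction absv P Q \<longleftrightarrow>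
     (\<exists>c. c \<noteq> 0 \<and> normalized_form absv (smult c P) (smult c Q) \<and>
        (\<forall>x y. max (absv x) (absv y) = 1 \<longrightarrow>
           max (absv (hom_eval (smult c P) (rdeg P Q) x y))
               (absv (hom_eval (smult c Q) (rdeg P Q) x y)) = 1))"

end

theory Submission
  imports Defs
begin

(*
  A multiplicative seminorm on L[T] extending the absolute value is automatically ultrametric.
  Good reduction turns the fixed point equation of phi at a seminorm t into
  t(F_b) = t(T - b) * t(Q), where F_b is the normalized numerator of phi - b, and gives
  t(Q) = 1 on the open unit disks and t(Q) = t(T)^(d-1) outside the closed unit disk.
  Total ramification at a fixed point xi means that every neighbourhood of xi contains all
  d preimages of some b, i.e. essentially all roots of F_b. If xi is not of type 1, a
  neighbourhood that is small compared with the diameter of xi makes t(F_b) too small for the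
  fixed point equation. The same squeeze, played against the fixed point equation of the type 1
  point xi itself, rules out a second fixed point in the direction of xi. These directions are
  the open unit disks around points of the closed unit disk and the complement of the closed
  unit disk: these sets are open, cover P^1 minus the Gauss point, and any two of them are
  equal or disjoint.
*)

lemma le_of_power_le_linear_mult_power:
  fixes y M :: real
  assumes "0 \<le> y" "0 \<le> M" and bound: "\<And>n. y ^ n \<le> real (n + 1) * M ^ n"
  shows "y \<le> M"
proof (rule LIMSEQ_le_const)
  show "(\<lambda>n. root n 2 * root n n * M) \<longlonglongrightarrow> M"
    using tendsto_mult[OF tendsto_mult[OF LIMSEQ_root_const LIMSEQ_root] tendsto_const]
    by fastforce
  have "y \<le> root n 2 * root n n * M" if "n \<ge> 1" for n
  proof -
    have "real (n + 1) * M ^ n \<le> (2 * real n) * M ^ n"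
      using that assms(2) by (intro mult_right_mono) auto
    then have "y ^ n \<le> (2 * real n) * M ^ n"
      using bound[of n] by linarith
    then have "root n (y ^ n) \<le> root n (2 * real n * M ^ n)"
      using that by (simp del: real_root_le_iff add: real_root_le_mono)
    then show ?thesis
      using that assms(1,2) by (simp add: real_root_power_cancel real_root_mult)
  qed
  then show "\<exists>N. \<forall>n\<ge>N. y \<le> root n 2 * root n n * M" by blast
qed

lemma prod_list_map_le_power:
  fixes g :: "'b \<Rightarrow> real"
  assumes "\<And>x. x \<in> set xs \<Longrightarrow> 0 \<le> g x \<and> g x \<le> B"
  shows "(\<Prod>x\<leftarrow>xs. g x) \<le> B ^ length xs"
  using assms
proof (induct xs)
  case (Cons x xs)
  then have "0 \<le> g x" "g x \<le> B" "0 \<le> (\<Prod>x\<leftarrow>xs. g x)"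
    by (auto intro!: prod_list_nonneg)
  with Cons show ?case
    by (auto intro: mult_mono order_trans)
qed simp

lemma prod_list_eq_power: "(\<And>x. x \<in> set xs \<Longrightarrow> g x = B) \<Longrightarrow> (\<Prod>x\<leftarrow>xs. g x) = B ^ length xs"
  by (induct xs) auto

lemma power_le_prod_list_map:
  fixes g :: "'b \<Rightarrow> real"
  assumes "\<And>x. x \<in> set xs \<Longrightarrow> B \<le> g x" "0 \<le> B"
  shows "B ^ length xs \<le> (\<Prod>x\<leftarrow>xs. g x)"
  using assms
proof (induct xs)
  case (Cons x xs)
  then show ?case
    by (simp, intro mult_mono) (auto intro: order_trans)
qed simp

lemma exists_between_power_less:
  fixes \<rho> K U :: real
  assumes "0 < \<rho>" "0 < n" "\<rho> ^ n < K" "\<rho> < U"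
  obtains r where "\<rho> < r" "r < U" "r ^ n < K"
proof -
  have "\<rho> < root n K"
    using assms real_root_less_mono[of n "\<rho> ^ n" K] by (simp add: real_root_power_cancel)
  define r where "r = (\<rho> + min U (root n K)) / 2"
  have "\<rho> < r" "r < U" "r < root n K"
    using \<open>\<rho> < root n K\<close> assms(4) by (auto simp: r_def)
  moreover have "r ^ n < root n K ^ n"
    using \<open>r < root n K\<close> \<open>\<rho> < r\<close> assms(1,2) by (intro power_strict_mono) auto
  ultimately show ?thesis
    using that assms by (metis less_trans real_root_pow_pos2 zero_less_power less_imp_le)
qed

section \<open>Ultrametric absolute values and multiplicative seminorms\<close>

abbreviation lin :: "'a::comm_ring_1 \<Rightarrow> 'a poly" where "lin r \<equiv> [:- r, 1:]"

declare mult_pCons_left [simp del]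

locale ultrametric_field =
  fixes absv :: "'a::field \<Rightarrow> real"
  assumes nonarch: "nonarch_abs absv"
begin

lemma absv_nonneg: "0 \<le> absv x"
  and absv_eq_0_iff [simp]: "absv x = 0 \<longleftrightarrow> x = 0"
  and absv_mult: "absv (x * y) = absv x * absv y"
  and absv_add_le_max: "absv (x + y) \<le> max (absv x) (absv y)"
  using nonarch by (simp_all add: nonarch_abs_def)

lemma absv_0 [simp]: "absv 0 = 0"
  by simp

lemma absv_1 [simp]: "absv 1 = 1"
  using absv_mult[of 1 1] by simp

lemma absv_minus_1 [simp]: "absv (- 1) = 1"
proof -
  have "absv (- 1) ^ 2 = 1"
    using absv_mult[of "- 1" "- 1"] by (simp add: power2_eq_square)
  then show ?thesis
    using absv_nonneg[of "- 1"] by (auto simp: power2_eq_1_iff)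
qed

lemma absv_uminus [simp]: "absv (- x) = absv x"
  using absv_mult[of "- 1" x] by simp

lemma absv_minus_commute: "absv (x - y) = absv (y - x)"
  by (metis absv_uminus minus_diff_eq)

lemma absv_diff_le_max: "absv (x - y) \<le> max (absv x) (absv y)"
  using absv_add_le_max[of x "- y"] by simp

lemma absv_add_eq_max:
  assumes "absv x \<noteq> absv y"
  shows "absv (x + y) = max (absv x) (absv y)"
  using absv_add_le_max[of x y] absv_diff_le_max[of "x + y" y] absv_diff_le_max[of "x + y" x] assms
  by (simp add: add.commute)

lemma absv_diff_eq_max: "absv x \<noteq> absv y \<Longrightarrow> absv (x - y) = max (absv x) (absv y)"
  using absv_add_eq_max[of x "- y"] by simp

lemma absv_eq_if_close: "absv (x - y) < absv y \<Longrightarrow> absv x = absv y"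
  using absv_add_eq_max[of y "x - y"] by fastforce

lemma absv_of_nat_le_1: "absv (of_nat n) \<le> 1"
  by (induct n) (simp_all add: order_trans[OF absv_add_le_max])

lemma berkA1_nonneg: "t \<in> berkA1 absv \<Longrightarrow> 0 \<le> t f"
  and berkA1_const: "t \<in> berkA1 absv \<Longrightarrow> t [:c:] = absv c"
  and berkA1_mult: "t \<in> berkA1 absv \<Longrightarrow> t (f * g) = t f * t g"
  and berkA1_add_le: "t \<in> berkA1 absv \<Longrightarrow> t (f + g) \<le> t f + t g"
  by (simp_all add: berkA1_def)

context
  fixes t assumes t: "t \<in> berkA1 absv"
begin

lemma berkA1_0 [simp]: "t 0 = 0"
  using berkA1_const[OF t, of 0] by simp

lemma berkA1_1 [simp]: "t 1 = 1"
  using berkA1_const[OF t, of 1] by (simp add: one_pCons)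

lemma berkA1_smult: "t (smult c f) = absv c * t f"
  using berkA1_mult[OF t, of "[:c:]" f] berkA1_const[OF t, of c] by (simp add: mult_pCons_left)

lemma berkA1_uminus [simp]: "t (- f) = t f"
  using berkA1_smult[of "- 1" f] by simp

lemma berkA1_power: "t (f ^ n) = t f ^ n"
  by (induct n) (simp_all add: berkA1_mult[OF t])

lemma berkA1_prod_list: "t (prod_list (map g xs)) = (\<Prod>x\<leftarrow>xs. t (g x))"
  by (induct xs) (simp_all add: berkA1_mult[OF t])

lemma berkA1_prod_lin: "t (smult l (prod_list (map lin rs))) = absv l * (\<Prod>r\<leftarrow>rs. t (lin r))"
  by (simp add: berkA1_smult berkA1_prod_list)

lemma berkA1_sum_le: "t (sum g I) \<le> (\<Sum>i\<in>I. t (g i))"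
  by (induct I rule: infinite_finite_induct) (auto intro: order_trans[OF berkA1_add_le[OF t]])

text \<open>Multiplicativity forces the ultrametric inequality: the binomial expansion of
  \<open>(f + g) ^ n\<close> has \<open>n + 1\<close> terms, each of seminorm at most \<open>max (t f) (t g) ^ n\<close>.\<close>
lemma berkA1_add_le_max: "t (f + g) \<le> max (t f) (t g)"
proof (rule le_of_power_le_linear_mult_power)
  let ?M = "max (t f) (t g)"
  show "0 \<le> t (f + g)" "0 \<le> ?M"
    using berkA1_nonneg[OF t] by (auto simp: le_max_iff_disj)
  fix n
  have "t ((f + g) ^ n) \<le> (\<Sum>k\<le>n. t (of_nat (n choose k) * f ^ k * g ^ (n - k)))"
    unfolding binomial_ring by (rule berkA1_sum_le)
  also have "\<dots> \<le> (\<Sum>k\<le>n. ?M ^ n)"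
  proof (rule sum_mono)
    fix k assume "k \<in> {..n}"
    have "t (of_nat (n choose k) * f ^ k * g ^ (n - k))
        = absv (of_nat (n choose k)) * t f ^ k * t g ^ (n - k)"
      by (simp add: berkA1_mult[OF t] berkA1_power of_nat_poly berkA1_const[OF t])
    also have "\<dots> \<le> 1 * ?M ^ k * ?M ^ (n - k)"
      using berkA1_nonneg[OF t] absv_of_nat_le_1
      by (intro mult_mono power_mono) (auto simp: le_max_iff_disj)
    also have "\<dots> = ?M ^ n"
      using \<open>k \<in> {..n}\<close> by (simp add: power_add[symmetric])
    finally show "t (of_nat (n choose k) * f ^ k * g ^ (n - k)) \<le> ?M ^ n" .
  qed
  finally show "t (f + g) ^ n \<le> real (n + 1) * ?M ^ n"
    by (simp add: berkA1_power)
qed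

lemma berkA1_diff_le_max: "t (f - g) \<le> max (t f) (t g)"
  using berkA1_add_le_max[of f "- g"] by simp

lemma berkA1_add_eq_max: "t f \<noteq> t g \<Longrightarrow> t (f + g) = max (t f) (t g)"
  using berkA1_add_le_max[of f g] berkA1_diff_le_max[of "f + g" g] berkA1_diff_le_max[of "f + g" f]
  by (simp add: add.commute)

lemma berkA1_sum_le_bound:
  assumes "\<And>i. i \<in> I \<Longrightarrow> t (g i) \<le> C" "0 \<le> C"
  shows "t (sum g I) \<le> C"
  using assms(1)
  by (induct I rule: infinite_finite_induct)
    (auto simp: assms(2) intro: order_trans[OF berkA1_add_le_max])

lemma berkA1_le_coeff_bound:
  assumes "t [:0, 1:] \<le> R" "\<And>i. i \<le> degree f \<Longrightarrow> absv (coeff f i) * R ^ i \<le> C" "0 \<le> C"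
  shows "t f \<le> C"
proof -
  have "t f = t (\<Sum>i\<le>degree f. monom (coeff f i) i)"
    by (simp add: poly_as_sum_of_monoms)
  also have "\<dots> \<le> C"
  proof (rule berkA1_sum_le_bound[OF _ assms(3)])
    fix i assume i: "i \<in> {..degree f}"
    have "t (monom (coeff f i) i) = absv (coeff f i) * t [:0, 1:] ^ i"
      by (simp add: monom_altdef berkA1_smult berkA1_power)
    also have "\<dots> \<le> absv (coeff f i) * R ^ i"
      using assms(1) berkA1_nonneg[OF t] absv_nonneg by (intro mult_left_mono power_mono) auto
    also have "\<dots> \<le> C"
      using assms(2) i by simp
    finally show "t (monom (coeff f i) i) \<le> C" .
  qed
  finally show ?thesis .
qed

lemma berkA1_lin_le_max: "t (lin x) \<le> max (t (lin c)) (absv (x - c))"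
proof -
  have "lin x = lin c + [:c - x:]"
    by simp
  then show ?thesis
    using berkA1_add_le_max[of "lin c" "[:c - x:]"] berkA1_const[OF t] absv_minus_commute
    by metis
qed

lemma berkA1_lin_far: "t [:0, 1:] < absv b \<Longrightarrow> t (lin b) = absv b"
  using berkA1_add_eq_max[of "[:0, 1:]" "[:- b:]"] berkA1_const[OF t, of "- b"] by simp

lemma berkA1_eq_type1_if_lin_zero:
  assumes "t (lin x) = 0"
  shows "t = (\<lambda>f. absv (poly f x))"
proof
  fix f
  have "lin x dvd f - [:poly f x:]"
    by (simp add: poly_eq_0_iff_dvd[symmetric])
  then obtain k where k: "f - [:poly f x:] = lin x * k"
    by (elim dvdE)
  have "t (f - [:poly f x:]) = 0"
    unfolding k berkA1_mult[OF t] assms by simp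
  then show "t f = absv (poly f x)"
    using berkA1_add_le_max[of "f - [:poly f x:]" "[:poly f x:]"]
      berkA1_diff_le_max[of f "f - [:poly f x:]"] berkA1_const[OF t, of "poly f x"]
      berkA1_nonneg[OF t, of f] absv_nonneg[of "poly f x"]
    by (simp add: max_def split: if_splits)
qed

end

lemma type1_in_berkA1: "(\<lambda>f. absv (poly f x)) \<in> berkA1 absv"
  by (auto simp: berkA1_def absv_nonneg absv_mult intro: order_trans[OF absv_add_le_max])

lemma type1_pt_in_Some_iff: "type1_pt absv x \<in> Some ` S \<longleftrightarrow> (\<lambda>f. absv (poly f x)) \<in> S"
  by (auto simp: type1_pt_def)

end

lemma alg_closed_split_lin:
  fixes F :: "'a::field poly"
  assumes alg: "alg_closed TYPE('a)" and "F \<noteq> 0"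
  obtains rs where "F = smult (lead_coeff F) (prod_list (map lin rs))" "length rs = degree F"
proof -
  have "\<exists>rs. F = smult (lead_coeff F) (prod_list (map lin rs)) \<and> length rs = degree F"
    using assms(2)
  proof (induct "degree F" arbitrary: F)
    case 0
    then show ?case
      by (intro exI[of _ "[]"]) (auto elim: degree_eq_zeroE)
  next
    case (Suc n)
    then obtain x where "poly F x = 0"
      using alg unfolding alg_closed_def by (metis One_nat_def Suc_le_mono le0)
    then obtain G where G: "F = lin x * G"
      by (auto simp: poly_eq_0_iff_dvd elim: dvdE)
    with Suc have "G \<noteq> 0" "degree G = n"
      by (auto simp: degree_mult_eq)
    with Suc obtain rs where rs: "G = smult (lead_coeff G) (prod_list (map lin rs))" "length rs = n"
      by metis
    have "F = smult (lead_coeff F) (prod_list (map lin (x # rs)))"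
      by (subst G, subst rs(1)) (simp add: G lead_coeff_mult)
    then show ?case
      using rs(2) Suc(2) by (intro exI[of _ "x # rs"]) simp
  qed
  then show ?thesis
    using that by blast
qed

lemma poly_smult_prod_lin: "poly (smult l (prod_list (map lin rs))) a = l * (\<Prod>r\<leftarrow>rs. a - r)"
  by (induct rs arbitrary: l) (auto simp: algebra_simps)

lemma order_smult_prod_lin:
  fixes l :: "'a::idom"
  assumes "l \<noteq> 0"
  shows "order a (smult l (prod_list (map lin rs))) = count (mset rs) a"
proof -
  have "order a (prod_list (map lin rs)) = count (mset rs) a"
  proof (induct rs)
    case Nil
    then show ?case
      using order_0I[of 1 a] by simp
  next
    case (Cons r rs)
    have "order a (lin r) = (if a = r then 1 else 0)"
      using order_power_n_n[of a 1] by (auto intro: order_0I)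
    moreover have "prod_list (map lin rs) \<noteq> 0"
      by (auto simp: prod_list_zero_iff)
    ultimately show ?case
      using Cons by (simp add: order_mult)
  qed
  then show ?thesis
    using assms by (simp add: order_smult)
qed

lemma sum_count_mset_eq_length_filter:
  assumes "finite B"
  shows "(\<Sum>a\<in>B. count (mset rs) a) = length (filter (\<lambda>x. x \<in> B) rs)"
proof (induct rs)
  case (Cons r rs)
  have "(\<Sum>a\<in>B. count (mset (r # rs)) a) = (\<Sum>a\<in>B. count (mset rs) a) + (\<Sum>a\<in>B. of_bool (a = r))"
    by (simp add: sum.distrib[symmetric] of_bool_def) (intro sum.cong, auto)
  then show ?case
    using Cons assms by (simp add: sum.delta')
qed simp

definition gauss_norm :: "('a::field \<Rightarrow> real) \<Rightarrow> 'a poly \<Rightarrow> real" where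
  "gauss_norm absv f = Max {absv (coeff f i) | i. i \<le> degree f}"

lemma gauss_pt_eq: "gauss_pt absv = Some (gauss_norm absv)"
  by (simp add: gauss_pt_def gauss_norm_def[abs_def])

context ultrametric_field
begin

lemma coeff_le_gauss_norm: "absv (coeff f i) \<le> gauss_norm absv f"
proof (cases "i \<le> degree f")
  case False
  have "absv (coeff f 0) \<le> gauss_norm absv f"
    unfolding gauss_norm_def by (intro Max_ge) auto
  then show ?thesis
    using False absv_nonneg[of "coeff f 0"] by (simp add: coeff_eq_0)
qed (auto simp: gauss_norm_def intro: Max_ge)

lemma gauss_norm_le: "(\<And>i. i \<le> degree f \<Longrightarrow> absv (coeff f i) \<le> C) \<Longrightarrow> gauss_norm absv f \<le> C"
  unfolding gauss_norm_def by (intro Max.boundedI) auto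

lemma gauss_norm_nonneg: "0 \<le> gauss_norm absv f"
  using coeff_le_gauss_norm[of f 0] absv_nonneg[of "coeff f 0"] by linarith

lemma gauss_norm_lin_mult_le: "gauss_norm absv (lin a * g) \<le> max 1 (absv a) * gauss_norm absv g"
proof (rule gauss_norm_le)
  fix i
  let ?B = "max 1 (absv a) * gauss_norm absv g"
  have "coeff (lin a * g) i = - a * coeff g i + (case i of 0 \<Rightarrow> 0 | Suc n \<Rightarrow> coeff g n)"
    by (simp add: coeff_pCons mult_pCons_left)
  moreover have "absv (- a * coeff g i) \<le> ?B"
    using coeff_le_gauss_norm[of g i] absv_nonneg gauss_norm_nonneg
    by (simp add: absv_mult) (intro mult_mono, auto)
  moreover have "absv (case i of 0 \<Rightarrow> 0 | Suc n \<Rightarrow> coeff g n) \<le> ?B"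
    using coeff_le_gauss_norm[of g] gauss_norm_nonneg[of g]
    by (auto split: nat.split intro: order_trans[OF _ mult_right_mono[of 1]])
  ultimately show "absv (coeff (lin a * g) i) \<le> ?B"
    by (metis absv_add_le_max max.bounded_iff order_trans)
qed

lemma gauss_norm_smult_prod_lin_le:
  "gauss_norm absv (smult l (prod_list (map lin rs))) \<le> absv l * (\<Prod>r\<leftarrow>rs. max 1 (absv r))"
proof (induct rs)
  case Nil
  show ?case
    by (rule gauss_norm_le) (auto simp: absv_nonneg)
next
  case (Cons r rs)
  have "gauss_norm absv (smult l (prod_list (map lin (r # rs))))
      = gauss_norm absv (lin r * smult l (prod_list (map lin rs)))"
    by (simp)
  also have "\<dots> \<le> max 1 (absv r) * (absv l * (\<Prod>r\<leftarrow>rs. max 1 (absv r)))"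
    using Cons by (intro order_trans[OF gauss_norm_lin_mult_le] mult_left_mono) auto
  finally show ?case
    by (simp add: mult_ac)
qed

text \<open>Such a \<open>t\<close> takes the value \<open>max 1 |a|\<close> at every \<open>T - a\<close>; splitting \<open>f\<close> into linear factors
  bounds the Gauss norm of \<open>f\<close> by \<open>t f\<close>.\<close>
lemma berkA1_eq_gauss_norm:
  assumes alg: "alg_closed TYPE('a)" and t: "t \<in> berkA1 absv" and tT: "t [:0, 1:] \<le> 1"
    and not_in_disk: "\<And>a. absv a \<le> 1 \<Longrightarrow> 1 \<le> t (lin a)"
  shows "t = gauss_norm absv"
proof
  fix f
  have lin_eq: "t (lin a) = max 1 (absv a)" for a
  proof (cases "absv a \<le> 1")
    case True
    then show ?thesis
      using not_in_disk[OF True] berkA1_lin_le_max[OF t, of a 0] tT by simp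
  next
    case False
    then show ?thesis
      using berkA1_lin_far[OF t, of a] tT by simp
  qed
  have "t f \<le> gauss_norm absv f"
    by (rule berkA1_le_coeff_bound[OF t tT]) (auto simp: coeff_le_gauss_norm gauss_norm_nonneg)
  moreover have "gauss_norm absv f \<le> t f"
  proof (cases "f = 0")
    case False
    then obtain rs where rs: "f = smult (lead_coeff f) (prod_list (map lin rs))"
      using alg_closed_split_lin[OF alg] by blast
    show ?thesis
      by (subst (1 2) rs) (simp add: berkA1_prod_lin[OF t] lin_eq gauss_norm_smult_prod_lin_le)
  qed (simp add: gauss_norm_def t)
  ultimately show "t f = gauss_norm absv f"
    by simp
qed

end

section \<open>The topology of the Berkovich line\<close>

lemma connected_component_of_in_clopen:
  assumes "connected_component_of (subtopology X S) x y"
    and "W \<union> V = S" "W \<inter> V = {}" "openin X W" "openin X V" "x \<in> W"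
  shows "y \<in> W"
proof -
  obtain C where C: "connectedin (subtopology X S) C" "x \<in> C" "y \<in> C"
    using assms(1) unfolding connected_component_of_def by blast
  then have "connectedin X C" "C \<subseteq> S"
    by (auto simp: connectedin_subtopology)
  then show ?thesis
    using assms(2-6) C(2,3) unfolding connectedin by blast
qed

context ultrametric_field
begin

lemma openin_berkA1_top: "openin (berkA1_top absv) = arbitrary union_of (finite intersection_of
    (\<lambda>S. \<exists>f a b. S = {s. a < s f \<and> s f < b}) relative_to berkA1 absv)"
  unfolding berkA1_top_def by (simp add: istopology_subbase)

lemma topspace_berkA1_top [simp]: "topspace (berkA1_top absv) = berkA1 absv"
  unfolding berkA1_top_def by simp

lemma openin_berkA1_between: "openin (berkA1_top absv) {t \<in> berkA1 absv. a < t f \<and> t f < b}"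
proof -
  have "(finite intersection_of (\<lambda>S. \<exists>f a b. S = {s. a < s f \<and> s f < b}) relative_to berkA1 absv)
          {t \<in> berkA1 absv. a < t f \<and> t f < b}"
    unfolding relative_to_def
    by (rule exI[of _ "{s. a < s f \<and> s f < b}"]) (auto intro!: finite_intersection_of_inc)
  then show ?thesis
    unfolding openin_berkA1_top by (rule arbitrary_union_of_inc)
qed

lemma openin_berkA1_less: "openin (berkA1_top absv) {t \<in> berkA1 absv. t f < b}"
proof -
  have "{t \<in> berkA1 absv. t f < b} = {t \<in> berkA1 absv. - 1 < t f \<and> t f < b}"
    by (auto dest: berkA1_nonneg[where f = f] intro: less_le_trans[of "- 1" 0])
  then show ?thesis
    using openin_berkA1_between by simp
qed

lemma openin_berkA1_greater: "openin (berkA1_top absv) {t \<in> berkA1 absv. a < t f}"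
proof -
  have "{t \<in> berkA1 absv. a < t f} = (\<Union>n. {t \<in> berkA1 absv. a < t f \<and> t f < real n})"
    by (auto intro: reals_Archimedean2)
  then show ?thesis
    using openin_berkA1_between by (auto intro!: openin_Union)
qed

lemma berkA1_le_gauss_norm_mult:
  assumes t: "t \<in> berkA1 absv" and "t [:0, 1:] \<le> M"
  shows "t f \<le> gauss_norm absv f * max 1 M ^ degree f"
proof (rule berkA1_le_coeff_bound[OF t])
  show "t [:0, 1:] \<le> max 1 M"
    using assms(2) by simp
  fix i assume "i \<le> degree f"
  then show "absv (coeff f i) * max 1 M ^ i \<le> gauss_norm absv f * max 1 M ^ degree f"
    by (intro mult_mono power_increasing coeff_le_gauss_norm) (auto simp: gauss_norm_nonneg)
qed (auto simp: gauss_norm_nonneg)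

abbreviation pointwise_top :: "('a poly \<Rightarrow> real) topology" where
  "pointwise_top \<equiv> product_topology (\<lambda>_. euclideanreal) UNIV"

lemma continuous_map_pointwise_top_eval: "continuous_map pointwise_top euclideanreal (\<lambda>t. t f)"
  using continuous_map_product_projection[of f UNIV "\<lambda>_. euclideanreal"] by simp

lemma closedin_pointwise_top_berkA1_disk:
  "closedin pointwise_top {t \<in> berkA1 absv. t [:0, 1:] \<le> M}"
proof -
  have cl: "closedin pointwise_top {t. h t \<in> C}"
    if "continuous_map pointwise_top euclideanreal h" "closed C" for h C
    using closedin_continuous_map_preimage[OF that(1), of C] that(2) by simp
  have cl_Inter: "closedin pointwise_top (\<Inter>i. S i)" if "\<And>i. closedin pointwise_top (S i)"
    for S :: "'b \<Rightarrow> ('a poly \<Rightarrow> real) set"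
    using that by (intro closedin_Inter) auto
  note ev = continuous_map_pointwise_top_eval
  have "{t \<in> berkA1 absv. t [:0, 1:] \<le> M}
      = (\<Inter>f. {t. t f \<in> {0..}}) \<inter> (\<Inter>c. {t. t [:c:] - absv c \<in> {0}})
        \<inter> (\<Inter>fg. {t. t (fst fg * snd fg) - t (fst fg) * t (snd fg) \<in> {0}})
        \<inter> (\<Inter>fg. {t. t (fst fg) + t (snd fg) - t (fst fg + snd fg) \<in> {0..}})
        \<inter> {t. t [:0, 1:] \<in> {..M}}"
    unfolding berkA1_def by (force simp: le_diff_eq diff_le_eq)
  also have "closedin pointwise_top \<dots>"
  proof (intro closedin_Int cl_Inter)
    show "closedin pointwise_top {t. t f \<in> {0..}}" for f
      by (rule cl[OF ev]) simp
    show "closedin pointwise_top {t. t [:c:] - absv c \<in> {0}}" for c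
      by (rule cl) (intro continuous_intros ev, simp)
    show "closedin pointwise_top {t. t (fst fg * snd fg) - t (fst fg) * t (snd fg) \<in> {0}}" for fg
      by (rule cl) (intro continuous_intros ev, simp)
    show "closedin pointwise_top {t. t (fst fg) + t (snd fg) - t (fst fg + snd fg) \<in> {0..}}" for fg
      by (rule cl) (intro continuous_intros ev, simp)
    show "closedin pointwise_top {t. t [:0, 1:] \<in> {..M}}"
      by (rule cl[OF ev]) simp
  qed
  finally show ?thesis .
qed

lemma continuous_map_pointwise_top_berkA1_top:
  assumes "K \<subseteq> berkA1 absv"
  shows "continuous_map (subtopology pointwise_top K) (berkA1_top absv) id"
  unfolding berkA1_top_def
proof (rule continuous_map_into_topology_subbase)
  show "id t \<in> topspace (topology (arbitrary union_of (finite intersection_of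
      (\<lambda>S. \<exists>f a b. S = {s. a < s f \<and> s f < b}) relative_to berkA1 absv)))"
    if "t \<in> topspace (subtopology pointwise_top K)" for t
    using that assms by auto
  fix U :: "('a poly \<Rightarrow> real) set"
  assume "\<exists>f a b. U = {s. a < s f \<and> s f < b}"
  then obtain f a b where U: "U = {s. a < s f \<and> s f < b}"
    by blast
  have "openin pointwise_top {t. t f \<in> {a<..<b}}"
    using openin_continuous_map_preimage[OF continuous_map_pointwise_top_eval[of f], of "{a<..<b}"]
    by simp
  then have "openin (subtopology pointwise_top K) (K \<inter> {t. t f \<in> {a<..<b}})"
    by (rule openin_subtopology_Int2)
  moreover have "{t \<in> topspace (subtopology pointwise_top K). id t \<in> U} = K \<inter> {t. t f \<in> {a<..<b}}"
    using U by auto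
  ultimately show "openin (subtopology pointwise_top K) {t \<in> topspace (subtopology pointwise_top K). id t \<in> U}"
    by simp
qed

text \<open>Tychonoff: the disk is a closed subset of a product of compact intervals in the topology of
  pointwise convergence, which is finer than the Gelfand topology.\<close>
lemma compactin_berkA1_disk: "compactin (berkA1_top absv) {t \<in> berkA1 absv. t [:0, 1:] \<le> M}"
proof -
  define K where "K = {t \<in> berkA1 absv. t [:0, 1:] \<le> M}"
  define Box where "Box = PiE UNIV (\<lambda>f. {0 .. gauss_norm absv f * max 1 M ^ degree f})"
  have "compactin pointwise_top Box"
    unfolding Box_def by (subst compactin_PiE) auto
  moreover have "K \<subseteq> Box"
  proof
    fix t assume "t \<in> K"
    then have "t \<in> berkA1 absv" "t [:0, 1:] \<le> M"
      by (simp_all add: K_def)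
    then show "t \<in> Box"
      using berkA1_le_gauss_norm_mult berkA1_nonneg by (simp add: Box_def PiE_UNIV_domain)
  qed
  ultimately have "compactin pointwise_top K"
    using closed_compactin closedin_pointwise_top_berkA1_disk unfolding K_def by blast
  then have "compactin (subtopology pointwise_top K) K"
    by (simp add: compactin_subtopology)
  from image_compactin[OF this continuous_map_pointwise_top_berkA1_top] show ?thesis
    by (simp add: K_def)
qed

lemma openin_berkP1_top:
  "openin (berkP1_top absv) U \<longleftrightarrow> U \<subseteq> berkP1 absv \<and> openin (berkA1_top absv) {s. Some s \<in> U} \<and>
      (None \<in> U \<longrightarrow> compactin (berkA1_top absv) (berkA1 absv - {s. Some s \<in> U}))"
proof -
  let ?A = "berkA1_top absv"
  define is_open where "is_open U \<longleftrightarrow> U \<subseteq> berkP1 absv \<and> openin ?A {s. Some s \<in> U} \<and>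
      (None \<in> U \<longrightarrow> compactin ?A (berkA1 absv - {s. Some s \<in> U}))" for U
  have istop: "istopology is_open"
    unfolding istopology_def
  proof (intro conjI allI impI ballI)
    fix S T assume "is_open S" "is_open T"
    moreover have "{s. Some s \<in> S \<inter> T} = {s. Some s \<in> S} \<inter> {s. Some s \<in> T}"
      by auto
    moreover have "berkA1 absv - {s. Some s \<in> S \<inter> T}
        = (berkA1 absv - {s. Some s \<in> S}) \<union> (berkA1 absv - {s. Some s \<in> T})"
      by auto
    ultimately show "is_open (S \<inter> T)"
      unfolding is_open_def by (simp add: openin_Int compactin_Un le_infI1)
  next
    fix \<K> assume K: "\<forall>S\<in>\<K>. is_open S"
    have "{s. Some s \<in> \<Union>\<K>} = (\<Union>S\<in>\<K>. {s. Some s \<in> S})"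
      by blast
    also have "openin ?A \<dots>"
      using K by (intro openin_Union) (auto simp: is_open_def)
    finally have op: "openin ?A {s. Some s \<in> \<Union>\<K>}" .
    have cpt: "compactin ?A (berkA1 absv - {s. Some s \<in> \<Union>\<K>})" if None: "None \<in> \<Union>\<K>"
    proof -
      obtain S where S: "S \<in> \<K>" "None \<in> S"
        using None by blast
      then have "compactin ?A (berkA1 absv - {s. Some s \<in> S})"
        using K by (simp add: is_open_def)
      moreover have "berkA1 absv - {s. Some s \<in> \<Union>\<K>} \<subseteq> berkA1 absv - {s. Some s \<in> S}"
        using S by blast
      moreover have "closedin ?A (berkA1 absv - {s. Some s \<in> \<Union>\<K>})"
        using op openin_subset[OF op] by (simp add: closedin_def double_diff)
      ultimately show ?thesis
        by (rule closed_compactin)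
    qed
    have "\<Union>\<K> \<subseteq> berkP1 absv"
      using K by (auto simp: is_open_def)
    with op cpt show "is_open (\<Union>\<K>)"
      unfolding is_open_def by simp
  qed
  have "berkP1_top absv = topology is_open"
    unfolding berkP1_top_def is_open_def[abs_def] ..
  then show ?thesis
    using topology_inverse'[OF istop] by (simp add: is_open_def)
qed

lemma topspace_berkP1_top [simp]: "topspace (berkP1_top absv) = berkP1 absv"
proof (rule antisym)
  show "topspace (berkP1_top absv) \<subseteq> berkP1 absv"
    using openin_berkP1_top[of "topspace (berkP1_top absv)"] by simp
  have "{s. Some s \<in> berkP1 absv} = berkA1 absv"
    by (auto simp: berkP1_def)
  then have "openin (berkP1_top absv) (berkP1 absv)"
    using openin_topspace[of "berkA1_top absv"] unfolding openin_berkP1_top by (simp add: berkP1_def)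
  then show "berkP1 absv \<subseteq> topspace (berkP1_top absv)"
    by (rule openin_subset)
qed

lemma openin_berkP1_Some:
  assumes "openin (berkA1_top absv) V"
  shows "openin (berkP1_top absv) (Some ` V)"
proof -
  have "{s. Some s \<in> Some ` V} = V"
    by auto
  then show ?thesis
    using assms openin_subset[OF assms] by (auto simp: openin_berkP1_top berkP1_def)
qed

lemma openin_berkP1_near_infinity:
  "openin (berkP1_top absv) (insert None (Some ` {t \<in> berkA1 absv. M < t [:0, 1:]}))"
proof -
  have "{s. Some s \<in> insert None (Some ` {t \<in> berkA1 absv. M < t [:0, 1:]})}
      = {t \<in> berkA1 absv. M < t [:0, 1:]}"
    by auto
  moreover have "berkA1 absv - {t \<in> berkA1 absv. M < t [:0, 1:]} = {t \<in> berkA1 absv. t [:0, 1:] \<le> M}"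
    by auto
  ultimately show ?thesis
    unfolding openin_berkP1_top using openin_berkA1_greater compactin_berkA1_disk
    by (auto simp: berkP1_def)
qed

end

context ultrametric_field
begin

lemma berkA1_T_le_1_if_near:
  assumes t: "t \<in> berkA1 absv" and "absv a \<le> 1" "t (lin a) < 1"
  shows "t [:0, 1:] \<le> 1"
  using berkA1_lin_le_max[OF t, of 0 a] assms(2,3) by simp

lemma berkA1_diff_const_le:
  assumes t: "t \<in> berkA1 absv" and tT: "t [:0, 1:] \<le> 1" and a: "absv a \<le> 1"
    and coeffs: "\<And>i. absv (coeff f i) \<le> 1"
  shows "t (f - [:poly f a:]) \<le> t (lin a)"
proof -
  have "f - [:poly f a:] = (\<Sum>i\<le>degree f. smult (coeff f i) ([:0, 1:] ^ i - [:a:] ^ i))"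
  proof -
    have "[:poly f a:] = (\<Sum>i\<le>degree f. smult (coeff f i) ([:a:] ^ i))"
      by (simp add: poly_altdef poly_const_pow sum_to_poly)
    moreover have "f = (\<Sum>i\<le>degree f. smult (coeff f i) ([:0, 1:] ^ i))"
      using poly_as_sum_of_monoms[of f] by (simp add: monom_altdef)
    ultimately show ?thesis
      by (simp add: sum_subtractf smult_diff_right)
  qed
  moreover have "t ([:0, 1:] ^ i - [:a:] ^ i) \<le> t (lin a)" for i
  proof (cases i)
    case 0
    then show ?thesis
      using berkA1_nonneg[OF t] by (simp add: berkA1_0[OF t])
  next
    case (Suc n)
    have "[:0, 1:] ^ i - [:a:] ^ i = lin a * (\<Sum>p<Suc n. [:0, 1:] ^ p * [:a:] ^ (n - p))"
      unfolding Suc diff_power_eq_sum by simp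
    moreover have "t (\<Sum>p<Suc n. [:0, 1:] ^ p * [:a:] ^ (n - p)) \<le> 1"
      using tT a berkA1_nonneg[OF t, of "[:0, 1:]"] absv_nonneg[of a]
      by (intro berkA1_sum_le_bound[OF t])
        (simp_all add: berkA1_mult[OF t] berkA1_power[OF t] berkA1_const[OF t] power_le_one mult_le_one)
    ultimately show ?thesis
      using berkA1_nonneg[OF t] by (simp add: berkA1_mult[OF t] mult_left_le)
  qed
  then have "t (smult (coeff f i) ([:0, 1:] ^ i - [:a:] ^ i)) \<le> t (lin a)" for i
    using coeffs[of i] absv_nonneg berkA1_nonneg[OF t] berkA1_smult[OF t]
    by (metis mult_right_mono order_trans mult_1)
  ultimately show ?thesis
    using berkA1_nonneg[OF t] by (simp add: berkA1_sum_le_bound[OF t])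
qed

lemma berkA1_eq_1_if_near:
  assumes t: "t \<in> berkA1 absv" and a: "absv a \<le> 1" "t (lin a) < 1"
    and coeffs: "\<And>i. absv (coeff f i) \<le> 1" and "absv (poly f a) = 1"
  shows "t f = 1"
proof -
  have "t (f - [:poly f a:]) < 1"
    using berkA1_diff_const_le[OF t berkA1_T_le_1_if_near[OF t a] a(1) coeffs] a(2) by simp
  moreover have "t [:poly f a:] = 1"
    using assms(5) berkA1_const[OF t] by simp
  ultimately show ?thesis
    using berkA1_add_eq_max[OF t, of "f - [:poly f a:]" "[:poly f a:]"] by simp
qed

lemma berkA1_le_power_T:
  assumes t: "t \<in> berkA1 absv" and "t [:0, 1:] = R" "1 < R"
    and coeffs: "\<And>i. absv (coeff f i) \<le> 1" and "degree f \<le> n"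
  shows "t f \<le> R ^ n"
proof (rule berkA1_le_coeff_bound[OF t])
  fix i assume "i \<le> degree f"
  then have "R ^ i \<le> R ^ n"
    using assms(3,5) by (intro power_increasing) auto
  then show "absv (coeff f i) * R ^ i \<le> R ^ n"
    using mult_mono[OF coeffs[of i], of "R ^ i" "R ^ n"] assms(3) by simp
qed (use assms in auto)

text \<open>Near infinity a polynomial with a unit coefficient in degree \<open>n\<close> is dominated by
  that monomial.\<close>
lemma berkA1_eq_power_T:
  assumes t: "t \<in> berkA1 absv" and R: "t [:0, 1:] = R" "1 < R"
    and coeffs: "\<And>i. absv (coeff f i) \<le> 1" and "degree f \<le> n" "0 < n"
    and unit: "absv (coeff f n) = 1"
  shows "t f = R ^ n"
proof -
  define g where "g = f - monom (coeff f n) n"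
  have "degree g \<le> n - 1"
    by (rule degree_le) (use assms(5,6) in \<open>auto simp: g_def coeff_monom coeff_eq_0\<close>)
  moreover have "absv (coeff g i) \<le> 1" for i
    using absv_diff_le_max[of "coeff f i" "coeff (monom (coeff f n) n) i"] coeffs[of i] unit
    by (simp add: g_def coeff_monom)
  ultimately have "t g \<le> R ^ (n - 1)"
    using berkA1_le_power_T[OF t R] by blast
  also have "\<dots> < R ^ n"
    using R assms(6) by (intro power_strict_increasing) auto
  finally have "t g < R ^ n" .
  moreover have "t (monom (coeff f n) n) = R ^ n"
    using unit R by (simp add: monom_altdef berkA1_smult[OF t] berkA1_power[OF t])
  ultimately show ?thesis
    using berkA1_add_eq_max[OF t, of g "monom (coeff f n) n"] by (simp add: g_def)
qed

lemma berkA1_smult_prod_lin_le: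
  assumes t: "t \<in> berkA1 absv" and "\<And>x. x \<in> set rs \<Longrightarrow> t (lin x) \<le> r"
  shows "t (smult l (prod_list (map lin rs))) \<le> absv l * r ^ length rs"
  unfolding berkA1_prod_lin[OF t]
  using assms berkA1_nonneg[OF t] absv_nonneg
  by (intro mult_left_mono prod_list_map_le_power) auto

end

context ultrametric_field
begin

definition diam :: "'a seminorm \<Rightarrow> real" where
  "diam t = (INF a. t (lin a))"

context
  fixes t assumes t: "t \<in> berkA1 absv"
begin

lemma bdd_below_lin: "bdd_below (range (\<lambda>a. t (lin a)))"
  using berkA1_nonneg[OF t] by (intro bdd_belowI[of _ 0]) auto

lemma diam_le: "diam t \<le> t (lin a)"
  unfolding diam_def using bdd_below_lin by (intro cINF_lower) auto

lemma diam_nonneg: "0 \<le> diam t"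
  unfolding diam_def using berkA1_nonneg[OF t] by (intro cINF_greatest) auto

lemma diam_less_iff: "diam t < y \<longleftrightarrow> (\<exists>a. t (lin a) < y)"
  unfolding diam_def using cINF_less_iff[OF UNIV_not_empty bdd_below_lin] by simp

text \<open>Over a complete field, only type 1 points have diameter \<open>0\<close>: centres of ever smaller
  disks around \<open>t\<close> form a Cauchy sequence, whose limit \<open>L\<close> has \<open>t(T - L) = 0\<close>.\<close>
lemma diam_pos:
  assumes complete: "complete_abs absv" and not_type1: "\<And>x. t \<noteq> (\<lambda>f. absv (poly f x))"
  shows "0 < diam t"
proof (rule ccontr)
  assume "\<not> 0 < diam t"
  then have "diam t < inverse (Suc n)" for n
    using diam_nonneg by (simp add: not_less order.trans[OF _ less_imp_le] less_le_trans)
  then obtain a where a: "\<And>n. t (lin (a n)) < inverse (Suc n)"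
    unfolding diam_less_iff by metis
  have tail: "\<exists>N. \<forall>n\<ge>N. t (lin (a n)) < e" if e: "0 < e" for e
  proof -
    obtain N where "inverse (real (Suc N)) < e"
      using reals_Archimedean[OF e] by blast
    moreover have "inverse (real (Suc n)) \<le> inverse (real (Suc N))" if "N \<le> n" for n
      using that by (simp add: le_imp_inverse_le)
    ultimately show ?thesis
      using a by (meson less_le_trans less_trans)
  qed
  have dist: "absv (a m - a n) \<le> max (t (lin (a m))) (t (lin (a n)))" for m n
    using berkA1_diff_le_max[OF t, of "lin (a n)" "lin (a m)"] berkA1_const[OF t, of "a m - a n"]
    by (simp add: max.commute)
  have "\<exists>N. \<forall>m\<ge>N. \<forall>n\<ge>N. absv (a m - a n) < e" if "0 < e" for e
    using tail[OF that] dist by (meson max_less_iff_conj order_le_less_trans)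
  then obtain L where L: "\<And>e. 0 < e \<Longrightarrow> \<exists>N. \<forall>n\<ge>N. absv (a n - L) < e"
    using complete unfolding complete_abs_def by blast
  have "t (lin L) < e" if e: "0 < e" for e
  proof -
    obtain N1 N2 where "\<forall>n\<ge>N1. t (lin (a n)) < e" "\<forall>n\<ge>N2. absv (a n - L) < e"
      using tail[OF e] L[OF e] by blast
    then have "t (lin (a (max N1 N2))) < e" "absv (L - a (max N1 N2)) < e"
      by (auto simp: absv_minus_commute)
    then show ?thesis
      using berkA1_lin_le_max[OF t, of L "a (max N1 N2)"] by simp
  qed
  then have "t (lin L) = 0"
    using berkA1_nonneg[OF t, of "lin L"] by (metis less_irrefl order_le_less)
  then show False
    using berkA1_eq_type1_if_lin_zero[OF t] not_type1 by blast
qed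

end

end

lemma hom_eval_affine:
  assumes "degree f \<le> n"
  shows "hom_eval f n x 1 = poly f x"
proof -
  have "poly f x = poly (\<Sum>i\<le>n. monom (coeff f i) i) x"
    using poly_as_sum_of_monoms'[OF assms] by simp
  then show ?thesis
    by (simp add: hom_eval_def poly_sum poly_monom)
qed

lemma hom_eval_infinity: "hom_eval f n 1 0 = coeff f n"
proof -
  have "hom_eval f n 1 0 = (\<Sum>i\<le>n. if i = n then coeff f i else 0)"
    unfolding hom_eval_def by (intro sum.cong) (auto simp: power_0_left)
  then show ?thesis
    by simp
qed

locale alg_closed_ultrametric_field = ultrametric_field absv for absv :: "'a::field \<Rightarrow> real" +
  assumes alg: "alg_closed TYPE('a)"

locale good_reduction_map = alg_closed_ultrametric_field absv for absv :: "'a::field \<Rightarrow> real" +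
  fixes P Q :: "'a poly" and c :: 'a
  assumes complete: "complete_abs absv"
    and coprime: "coprime P Q" and deg_ge_2: "rdeg P Q \<ge> 2"
    and c_nonzero: "c \<noteq> 0" and normalized: "normalized_form absv (smult c P) (smult c Q)"
    and reduction: "\<forall>x y. max (absv x) (absv y) = 1 \<longrightarrow>
           max (absv (hom_eval (smult c P) (rdeg P Q) x y))
               (absv (hom_eval (smult c Q) (rdeg P Q) x y)) = 1"
begin

abbreviation "d \<equiv> rdeg P Q"
abbreviation "Pn \<equiv> smult c P"
abbreviation "Qn \<equiv> smult c Q"

text \<open>The normalized numerator of \<open>\<phi> - b\<close>; its roots are the preimages of \<open>b\<close>.\<close>
definition Fn :: "'a \<Rightarrow> 'a poly" where
  "Fn b = Pn - smult b Qn"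

lemma coeff_Pn_le_1: "absv (coeff Pn i) \<le> 1"
  and coeff_Qn_le_1: "absv (coeff Qn i) \<le> 1"
  using normalized by (auto simp: normalized_form_def)

lemma degree_Pn_le: "degree Pn \<le> d"
  and degree_Qn_le: "degree Qn \<le> d"
  by (auto simp: rdeg_def)

lemma reduction_affine: "absv x \<le> 1 \<Longrightarrow> max (absv (poly Pn x)) (absv (poly Qn x)) = 1"
  using reduction[rule_format, of x 1] hom_eval_affine[OF degree_Pn_le] hom_eval_affine[OF degree_Qn_le]
  by (simp add: max_def)

lemma reduction_infinity: "max (absv (coeff Pn d)) (absv (coeff Qn d)) = 1"
  using reduction[rule_format, of 1 0] by (simp add: hom_eval_infinity)

lemma Fn_eq: "Fn b = smult c (P - smult b Q)"
  by (simp add: Fn_def smult_diff_right mult.commute)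

lemma Fn_0: "Fn 0 = Pn"
  by (simp add: Fn_def)

lemma coeff_Fn_le: "absv (coeff (Fn b) k) \<le> max 1 (absv b)"
proof -
  have "absv (coeff (Fn b) k) \<le> max (absv (coeff Pn k)) (absv (b * coeff Qn k))"
    unfolding Fn_def coeff_diff coeff_smult[of b] by (rule absv_diff_le_max)
  also have "\<dots> \<le> max 1 (absv b)"
    using coeff_Pn_le_1[of k] coeff_Qn_le_1[of k] absv_nonneg[of b]
    by (intro max.mono) (auto simp: absv_mult intro: mult_left_le)
  finally show ?thesis .
qed

lemma P_minus_smult_Q_nonzero: "P - smult b Q \<noteq> 0"
proof
  assume "P - smult b Q = 0"
  then have PQ: "P = smult b Q"
    by simp
  then have "Q dvd P"
    by (simp add: dvd_smult)
  then have "is_unit Q"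
    using coprime by (intro coprime_common_divisor[OF coprime]) auto
  then have "degree Q = 0"
    using is_unit_iff_degree[of Q] by (cases "Q = 0") auto
  moreover have "degree P = 0"
    using PQ calculation by simp
  ultimately show False
    using deg_ge_2 by (simp add: rdeg_def)
qed

lemma Fn_nonzero: "Fn b \<noteq> 0"
  using P_minus_smult_Q_nonzero c_nonzero Fn_eq by simp

lemma degree_Fn: "degree (Fn b) = degree (P - smult b Q)"
  using Fn_eq c_nonzero by simp

lemma degree_Fn_le: "degree (Fn b) \<le> d"
  unfolding Fn_def using degree_Pn_le degree_Qn_le by (intro degree_diff_le) auto

lemma lead_coeff_Fn_le: "absv (lead_coeff (Fn b)) \<le> max 1 (absv b)"
  by (rule coeff_Fn_le)

text \<open>Evaluate the factorization at \<open>0\<close>: the constant coefficient is \<open>l \<Prod>(- r)\<close>.\<close>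
lemma lead_coeff_mult_prod_roots_le:
  assumes "Fn b = smult l (prod_list (map lin rs))"
  shows "absv l * (\<Prod>r\<leftarrow>rs. absv r) \<le> max 1 (absv b)"
proof -
  have "absv (\<Prod>r\<leftarrow>rs. - r) = (\<Prod>r\<leftarrow>rs. absv r)"
    by (induct rs) (simp_all add: absv_mult)
  then have "absv (poly (Fn b) 0) = absv l * (\<Prod>r\<leftarrow>rs. absv r)"
    by (simp only: assms poly_smult_prod_lin absv_mult diff_0)
  then show ?thesis
    using coeff_Fn_le[of b 0] by (simp add: poly_0_coeff_0)
qed

end

context good_reduction_map
begin

lemma fixed_point_eq:
  assumes t: "t \<in> berkA1 absv" and fixed: "phi_act P Q absv (Some t) = Some t"
  shows "t (Fn b) = t (lin b) * t Qn"
proof -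
  have tQ: "t Q \<noteq> 0"
    using fixed by (auto simp: phi_act_def split: if_splits)
  then have "(\<lambda>h. t (hsubst P Q h) / t Q ^ degree h) = t"
    using fixed by (simp add: phi_act_def)
  then have "t (hsubst P Q (lin b)) / t Q ^ degree (lin b) = t (lin b)"
    by (rule fun_cong)
  then have "t (P - smult b Q) = t (lin b) * t Q"
    using tQ by (simp add: hsubst_def field_simps)
  then show ?thesis
    by (simp add: Fn_eq berkA1_smult[OF t])
qed

lemma fixed_point_in_unit_disk:
  assumes t: "t \<in> berkA1 absv" and fixed: "phi_act P Q absv (Some t) = Some t"
    and a: "absv a \<le> 1" "t (lin a) < 1"
  shows "t Qn = 1"
proof -
  have tT: "t [:0, 1:] \<le> 1"
    by (rule berkA1_T_le_1_if_near[OF t a])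
  have le: "t Pn \<le> 1" "t Qn \<le> 1"
    using berkA1_le_coeff_bound[OF t tT] coeff_Pn_le_1 coeff_Qn_le_1 by auto
  have "absv (poly Pn a) = 1 \<or> absv (poly Qn a) = 1"
    using reduction_affine[OF a(1)] unfolding max_def by (auto split: if_splits)
  then have "t Pn = 1 \<or> t Qn = 1"
    using berkA1_eq_1_if_near[OF t a coeff_Pn_le_1] berkA1_eq_1_if_near[OF t a coeff_Qn_le_1]
    by blast
  moreover have "t Pn \<le> t Qn"
    using fixed_point_eq[OF t fixed, of 0] tT berkA1_nonneg[OF t]
    by (simp add: Fn_0 mult_left_le_one_le)
  ultimately show ?thesis
    using le by auto
qed

lemma fixed_point_outside_unit_disk:
  assumes t: "t \<in> berkA1 absv" and fixed: "phi_act P Q absv (Some t) = Some t"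
    and R: "t [:0, 1:] = R" "1 < R"
  shows "absv (coeff Pn d) = 1" "t Qn = R ^ (d - 1)"
proof -
  have d: "0 < d" "R ^ d = R * R ^ (d - 1)"
    using deg_ge_2 power_minus_mult[of d R] by (simp_all add: mult.commute)
  have eq: "t Pn = R * t Qn"
    using fixed_point_eq[OF t fixed, of 0] R by (simp add: Fn_0)
  show unit: "absv (coeff Pn d) = 1"
  proof (rule ccontr)
    assume "absv (coeff Pn d) \<noteq> 1"
    then have "absv (coeff Qn d) = 1"
      using reduction_infinity unfolding max_def by (auto split: if_splits)
    then have "t Qn = R ^ d"
      by (rule berkA1_eq_power_T[OF t R coeff_Qn_le_1 degree_Qn_le d(1)])
    moreover have "t Pn \<le> R ^ d"
      by (rule berkA1_le_power_T[OF t R coeff_Pn_le_1 degree_Pn_le])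
    ultimately show False
      using eq R by (simp add: mult_le_cancel_right1)
  qed
  have "R * t Qn = R * R ^ (d - 1)"
    using berkA1_eq_power_T[OF t R coeff_Pn_le_1 degree_Pn_le d(1) unit] eq d(2) by simp
  then show "t Qn = R ^ (d - 1)"
    using R by simp
qed

lemma phi_act_None_eq_None_iff: "phi_act P Q absv None = None \<longleftrightarrow> degree Q < degree P"
  by (auto simp: phi_act_def type1_pt_def)

lemma lead_coeff_Fn_if_infinity_fixed:
  assumes "degree Q < degree P" "absv (coeff Pn d) = 1"
  shows "degree (Fn b) = d" "absv (lead_coeff (Fn b)) = 1"
proof -
  have "coeff Q d = 0"
    using assms(1) by (simp add: rdeg_def coeff_eq_0)
  then have cd: "coeff (Fn b) d = coeff Pn d"
    by (simp add: Fn_def)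
  then have "coeff (Fn b) d \<noteq> 0"
    using assms(2) by auto
  then show deg: "degree (Fn b) = d"
    by (intro antisym degree_Fn_le le_degree)
  show "absv (lead_coeff (Fn b)) = 1"
    by (simp only: deg cd assms(2))
qed

lemma cnt_pre_eq:
  assumes rs: "Fn b = smult (lead_coeff (Fn b)) (prod_list (map lin rs))"
  shows "cnt_pre P Q absv U b = length (filter (\<lambda>x. type1_pt absv x \<in> U) rs)
      + (if None \<in> U then d - degree (P - smult b Q) else 0)"
proof -
  have l: "lead_coeff (Fn b) \<noteq> 0"
    using Fn_nonzero by simp
  have "poly (Fn b) a = lead_coeff (Fn b) * (\<Prod>r\<leftarrow>rs. a - r)" for a
    by (metis rs poly_smult_prod_lin)
  then have roots: "poly (P - smult b Q) a = 0 \<longleftrightarrow> a \<in> set rs" for a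
    using l c_nonzero by (auto simp: Fn_eq prod_list_zero_iff)
  have order: "order a (P - smult b Q) = count (mset rs) a" for a
  proof -
    have "order a (P - smult b Q) = order a (Fn b)"
      using c_nonzero by (simp add: Fn_eq order_smult)
    also have "\<dots> = count (mset rs) a"
      by (subst rs) (rule order_smult_prod_lin[OF l])
    finally show ?thesis .
  qed
  define A where "A = {a. poly (P - smult b Q) a = 0 \<and> type1_pt absv a \<in> U}"
  have A: "A = {a \<in> set rs. type1_pt absv a \<in> U}"
    unfolding A_def roots by simp
  have "(\<Sum>a\<in>A. order a (P - smult b Q)) = length (filter (\<lambda>x. x \<in> A) rs)"
    unfolding order by (rule sum_count_mset_eq_length_filter) (simp add: A)
  also have "filter (\<lambda>x. x \<in> A) rs = filter (\<lambda>x. type1_pt absv x \<in> U) rs"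
    unfolding A by (intro filter_cong) auto
  finally show ?thesis
    unfolding cnt_pre_def A_def by simp
qed

lemma factor_Fn:
  obtains rs where "Fn b = smult (lead_coeff (Fn b)) (prod_list (map lin rs))"
    "length rs = degree (Fn b)"
  using alg_closed_split_lin[OF alg Fn_nonzero] by blast

lemma cnt_pre_le: "cnt_pre P Q absv U b \<le> d"
proof -
  obtain rs where rs: "Fn b = smult (lead_coeff (Fn b)) (prod_list (map lin rs))"
    "length rs = degree (Fn b)"
    by (rule factor_Fn)
  have "length (filter (\<lambda>x. type1_pt absv x \<in> U) rs) \<le> degree (P - smult b Q)"
    by (metis length_filter_le rs(2) degree_Fn)
  moreover have "degree (P - smult b Q) \<le> d"
    by (metis degree_Fn_le degree_Fn)
  ultimately show ?thesis
    unfolding cnt_pre_eq[OF rs(1)] by auto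
qed

text \<open>If \<open>m\<^sub>\<phi>(\<xi>) = d\<close>, every neighbourhood \<open>U\<close> of \<open>\<xi>\<close> contains all \<open>d\<close> preimages of some \<open>b\<close>;
  all but the one at \<open>\<infinity>\<close> are roots of \<open>Fn b\<close>.\<close>
lemma totally_ramified_preimages:
  assumes "totally_ramified P Q absv \<xi>" "openin (berkP1_top absv) U" "\<xi> \<in> U"
  obtains b rs where "Fn b = smult (lead_coeff (Fn b)) (prod_list (map lin rs))"
    "length rs = degree (Fn b)" "\<forall>r\<in>set rs. type1_pt absv r \<in> U"
    "None \<notin> U \<Longrightarrow> length rs = d"
proof -
  have fin: "finite (range (cnt_pre P Q absv U))"
    using cnt_pre_le by (auto simp: finite_nat_set_iff_bounded_le)
  have "d = loc_mult P Q absv \<xi>"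
    using assms(1) by (simp add: totally_ramified_def)
  also have "\<dots> \<le> (SUP b. cnt_pre P Q absv U b)"
    unfolding loc_mult_def using assms(2,3) by (intro cINF_lower) (auto intro: bdd_belowI[of _ 0])
  finally have "d \<le> (SUP b. cnt_pre P Q absv U b)" .
  moreover have "(SUP b. cnt_pre P Q absv U b) \<in> range (cnt_pre P Q absv U)"
    using fin by (simp add: cSup_eq_Max)
  ultimately obtain b where b: "d \<le> cnt_pre P Q absv U b"
    by auto
  obtain rs where rs: "Fn b = smult (lead_coeff (Fn b)) (prod_list (map lin rs))"
    "length rs = degree (Fn b)"
    by (rule factor_Fn)
  define inU where "inU = length (filter (\<lambda>x. type1_pt absv x \<in> U) rs)"
  define e where "e = degree (P - smult b Q)"
  have "inU \<le> length rs"
    by (simp add: inU_def)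
  moreover have "length rs = e" "e \<le> d"
    using rs(2) degree_Fn_le[of b] unfolding e_def degree_Fn by simp_all
  moreover have "d \<le> inU + (if None \<in> U then d - e else 0)"
    using b unfolding cnt_pre_eq[OF rs(1)] inU_def e_def .
  ultimately have all: "length rs \<le> inU" and "None \<notin> U \<Longrightarrow> length rs = d"
    by (simp_all split: if_splits)
  have "\<forall>r\<in>set rs. type1_pt absv r \<in> U"
  proof (rule ccontr)
    assume "\<not> (\<forall>r\<in>set rs. type1_pt absv r \<in> U)"
    then obtain r where "r \<in> set rs" "type1_pt absv r \<notin> U"
      by blast
    then have "inU < length rs"
      unfolding inU_def by (rule length_filter_less)
    with all show False
      by simp
  qed
  with rs \<open>None \<notin> U \<Longrightarrow> length rs = d\<close> show ?thesis
    using that by blast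
qed

lemma totally_ramified_roots_in_disk:
  assumes "totally_ramified P Q absv \<xi>" and \<xi>: "\<xi> \<in> Some ` {s \<in> berkA1 absv. s (lin a) < r}"
  obtains b rs where "Fn b = smult (lead_coeff (Fn b)) (prod_list (map lin rs))"
    "length rs = d" "\<And>x. x \<in> set rs \<Longrightarrow> absv (x - a) < r"
proof -
  let ?U = "Some ` {s \<in> berkA1 absv. s (lin a) < r}"
  have "openin (berkP1_top absv) ?U"
    by (rule openin_berkP1_Some[OF openin_berkA1_less])
  then obtain b rs where rs: "Fn b = smult (lead_coeff (Fn b)) (prod_list (map lin rs))"
    "length rs = degree (Fn b)" "\<forall>x\<in>set rs. type1_pt absv x \<in> ?U" "None \<notin> ?U \<Longrightarrow> length rs = d"
    by (rule totally_ramified_preimages[OF assms(1) _ \<xi>]) blast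
  have "length rs = d"
    using rs(4) by blast
  moreover have "absv (x - a) < r" if "x \<in> set rs" for x
    using rs(3) that unfolding type1_pt_in_Some_iff by simp
  ultimately show ?thesis
    using that rs(1) by blast
qed

lemma berkA1_Fn_le:
  assumes t: "t \<in> berkA1 absv" and rs: "Fn b = smult (lead_coeff (Fn b)) (prod_list (map lin rs))"
    and "length rs = d" and near: "\<And>x. x \<in> set rs \<Longrightarrow> t (lin x) \<le> r"
  shows "t (Fn b) \<le> absv (lead_coeff (Fn b)) * r ^ d"
  unfolding arg_cong[OF rs, of t]
  using berkA1_smult_prod_lin_le[OF t, where rs = rs and r = r] near assms(3) by simp

end

section \<open>Directions at the Gauss point\<close>

context alg_closed_ultrametric_field
begin

definition open_unit_disk :: "'a \<Rightarrow> 'a seminorm option set" where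
  "open_unit_disk a = Some ` {t \<in> berkA1 absv. t (lin a) < 1}"

definition outer_disk :: "'a seminorm option set" where
  "outer_disk = insert None (Some ` {t \<in> berkA1 absv. 1 < t [:0, 1:]})"

lemma openin_open_unit_disk: "openin (berkP1_top absv) (open_unit_disk a)"
  unfolding open_unit_disk_def by (rule openin_berkP1_Some[OF openin_berkA1_less])

lemma openin_outer_disk: "openin (berkP1_top absv) outer_disk"
  unfolding outer_disk_def by (rule openin_berkP1_near_infinity)

lemma gauss_pt_notin_open_unit_disk: "gauss_pt absv \<notin> open_unit_disk a"
  using coeff_le_gauss_norm[of "lin a" 1] by (auto simp: open_unit_disk_def gauss_pt_eq)

lemma gauss_pt_notin_outer_disk: "gauss_pt absv \<notin> outer_disk"
proof -
  have "gauss_norm absv [:0, 1:] \<le> 1"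
    by (rule gauss_norm_le) (auto simp: coeff_pCons split: nat.split)
  then show ?thesis
    by (auto simp: outer_disk_def gauss_pt_eq)
qed

lemma open_unit_disk_Int_outer_disk:
  assumes "absv a \<le> 1"
  shows "open_unit_disk a \<inter> outer_disk = {}"
proof -
  have "\<not> 1 < t [:0, 1:]" if "t \<in> berkA1 absv" "t (lin a) < 1" for t
    using berkA1_T_le_1_if_near[OF that(1) assms that(2)] by simp
  then show ?thesis
    unfolding open_unit_disk_def outer_disk_def by auto
qed

lemma open_unit_disk_eq:
  assumes "absv (a - b) < 1"
  shows "open_unit_disk a = open_unit_disk b"
proof -
  have "t (lin a) < 1 \<longleftrightarrow> t (lin b) < 1" if "t \<in> berkA1 absv" for t
    using berkA1_lin_le_max[OF that, of a b] berkA1_lin_le_max[OF that, of b a] assms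
      absv_minus_commute[of a b] by auto
  then have "{t \<in> berkA1 absv. t (lin a) < 1} = {t \<in> berkA1 absv. t (lin b) < 1}"
    by blast
  then show ?thesis
    unfolding open_unit_disk_def by simp
qed

lemma open_unit_disk_disjoint:
  assumes "1 \<le> absv (a - b)"
  shows "open_unit_disk a \<inter> open_unit_disk b = {}"
proof -
  have False if "t \<in> berkA1 absv" "t (lin a) < 1" "t (lin b) < 1" for t
    using berkA1_diff_le_max[OF that(1), of "lin b" "lin a"] berkA1_const[OF that(1), of "a - b"]
      that(2,3) assms by simp
  then show ?thesis
    by (auto simp: open_unit_disk_def)
qed

lemma berkP1_minus_gauss_pt:
  "berkP1 absv - {gauss_pt absv} = outer_disk \<union> (\<Union>a\<in>{a. absv a \<le> 1}. open_unit_disk a)"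
proof (intro equalityI subsetI)
  fix \<eta> assume \<eta>: "\<eta> \<in> berkP1 absv - {gauss_pt absv}"
  show "\<eta> \<in> outer_disk \<union> (\<Union>a\<in>{a. absv a \<le> 1}. open_unit_disk a)"
  proof (cases \<eta>)
    case (Some t)
    then have t: "t \<in> berkA1 absv" "t \<noteq> gauss_norm absv"
      using \<eta> by (auto simp: berkP1_def gauss_pt_eq)
    show ?thesis
    proof (cases "1 < t [:0, 1:]")
      case False
      then obtain a where "absv a \<le> 1" "t (lin a) < 1"
        using berkA1_eq_gauss_norm[OF alg t(1)] t(2) by (meson not_le)
      then show ?thesis
        using Some t by (auto simp: open_unit_disk_def)
    qed (use Some t in \<open>simp add: outer_disk_def\<close>)
  qed (simp add: outer_disk_def)
next
  fix \<eta> assume \<eta>: "\<eta> \<in> outer_disk \<union> (\<Union>a\<in>{a. absv a \<le> 1}. open_unit_disk a)"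
  then have "\<eta> \<in> berkP1 absv"
    by (auto simp: outer_disk_def open_unit_disk_def berkP1_def)
  moreover have "\<eta> \<noteq> gauss_pt absv"
    using \<eta> gauss_pt_notin_outer_disk gauss_pt_notin_open_unit_disk by blast
  ultimately show "\<eta> \<in> berkP1 absv - {gauss_pt absv}"
    by simp
qed

lemma dir_disk_gauss_pt_subset:
  assumes "\<xi> \<in> W" "W \<union> V = berkP1 absv - {gauss_pt absv}" "W \<inter> V = {}"
    "openin (berkP1_top absv) W" "openin (berkP1_top absv) V"
  shows "dir_disk absv (gauss_pt absv) \<xi> \<subseteq> W"
  using connected_component_of_in_clopen[OF _ assms(2-5,1)]
  by (auto simp: dir_disk_def)

lemma dir_disk_subset_open_unit_disk:
  assumes "absv x0 \<le> 1" "\<xi> \<in> open_unit_disk x0"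
  shows "dir_disk absv (gauss_pt absv) \<xi> \<subseteq> open_unit_disk x0"
proof (rule dir_disk_gauss_pt_subset[OF assms(2) _ _ openin_open_unit_disk])
  define V where "V = outer_disk \<union> (\<Union>a\<in>{a. absv a \<le> 1 \<and> 1 \<le> absv (a - x0)}. open_unit_disk a)"
  show "openin (berkP1_top absv) V"
    unfolding V_def using openin_outer_disk openin_open_unit_disk by blast
  have "open_unit_disk a \<subseteq> open_unit_disk x0 \<union> V" if "absv a \<le> 1" for a
  proof (cases "absv (a - x0) < 1")
    case True
    then show ?thesis
      using open_unit_disk_eq by blast
  next
    case False
    then show ?thesis
      using that unfolding V_def by auto
  qed
  then show "open_unit_disk x0 \<union> V = berkP1 absv - {gauss_pt absv}"
    unfolding berkP1_minus_gauss_pt using assms(1) unfolding V_def by blast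
  have "open_unit_disk x0 \<inter> open_unit_disk a = {}" if "1 \<le> absv (a - x0)" for a
    using open_unit_disk_disjoint[of x0 a] that by (simp add: absv_minus_commute)
  then show "open_unit_disk x0 \<inter> V = {}"
    unfolding V_def using open_unit_disk_Int_outer_disk[OF assms(1)] by blast
qed

lemma dir_disk_subset_outer_disk:
  assumes "\<xi> \<in> outer_disk"
  shows "dir_disk absv (gauss_pt absv) \<xi> \<subseteq> outer_disk"
proof (rule dir_disk_gauss_pt_subset[OF assms _ _ openin_outer_disk])
  show "openin (berkP1_top absv) (\<Union>a\<in>{a. absv a \<le> 1}. open_unit_disk a)"
    using openin_open_unit_disk by blast
  show "outer_disk \<union> (\<Union>a\<in>{a. absv a \<le> 1}. open_unit_disk a) = berkP1 absv - {gauss_pt absv}"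
    by (rule berkP1_minus_gauss_pt[symmetric])
  show "outer_disk \<inter> (\<Union>a\<in>{a. absv a \<le> 1}. open_unit_disk a) = {}"
    using open_unit_disk_Int_outer_disk by blast
qed

end

section \<open>Totally ramified fixed points are of type 1\<close>

context good_reduction_map
begin

text \<open>All \<open>d\<close> roots of some \<open>Fn b\<close> lie in the disk \<open>t(T - a) < r\<close> around \<open>t\<close>, which bounds \<open>t(Fn b)\<close>
  from above; evaluating \<open>Fn b\<close> at \<open>0\<close> bounds its leading coefficient.\<close>
lemma fixed_point_near_roots_bound:
  assumes t: "t \<in> berkA1 absv" and fixed: "phi_act P Q absv (Some t) = Some t"
    and ram: "totally_ramified P Q absv (Some t)"
    and R: "1 \<le> R" "t [:0, 1:] \<le> R" "t Qn = R ^ (d - 1)" "R = 1 \<or> t [:0, 1:] = R"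
    and a: "t (lin a) < r" "r < R"
  obtains b where "t (lin b) * (R ^ (d - 1) * R ^ d) \<le> max 1 (absv b) * r ^ d"
proof -
  have "Some t \<in> Some ` {s \<in> berkA1 absv. s (lin a) < r}"
    using t a by simp
  then obtain b rs where rs: "Fn b = smult (lead_coeff (Fn b)) (prod_list (map lin rs))"
    "length rs = d" "\<And>x. x \<in> set rs \<Longrightarrow> absv (x - a) < r"
    by (rule totally_ramified_roots_in_disk[OF ram]) blast
  define l where "l = absv (lead_coeff (Fn b))"
  have "t (lin x) \<le> r" if "x \<in> set rs" for x
    using berkA1_lin_le_max[OF t, of x a] a rs(3)[OF that] by simp
  then have upper: "t (lin b) * R ^ (d - 1) \<le> l * r ^ d"
    using berkA1_Fn_le[OF t rs(1,2)] fixed_point_eq[OF t fixed, of b] R(3) unfolding l_def by simp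
  have lower: "l * R ^ d \<le> max 1 (absv b)"
    using R(4)
  proof
    assume "R = 1"
    then show ?thesis
      using lead_coeff_Fn_le[of b] by (simp add: l_def)
  next
    assume tT: "t [:0, 1:] = R"
    have "absv a \<le> max (t [:0, 1:]) (t (lin a))"
      using berkA1_diff_le_max[OF t, of "[:0, 1:]" "lin a"] berkA1_const[OF t, of a] by simp
    then have "absv a = R"
      using berkA1_lin_le_max[OF t, of 0 a] a tT by auto
    then have "absv x = R" if "x \<in> set rs" for x
      using absv_eq_if_close[of x a] rs(3)[OF that] a(2) by simp
    then show ?thesis
      using lead_coeff_mult_prod_roots_le[OF rs(1)] rs(2) by (simp add: l_def prod_list_eq_power)
  qed
  have r: "0 \<le> r"
    using berkA1_nonneg[OF t, of "lin a"] a(1) by simp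
  have "t (lin b) * (R ^ (d - 1) * R ^ d) = (t (lin b) * R ^ (d - 1)) * R ^ d"
    by (simp only: mult.assoc)
  also have "\<dots> \<le> (l * r ^ d) * R ^ d"
    using upper R(1) by (intro mult_right_mono) auto
  also have "\<dots> = (l * R ^ d) * r ^ d"
    by (simp only: mult_ac)
  also have "\<dots> \<le> max 1 (absv b) * r ^ d"
    using lower r by (intro mult_right_mono) auto
  finally show ?thesis
    by (rule that)
qed

text \<open>If \<open>t\<close> is not of type 1, take \<open>r\<close> between \<open>diam t\<close> and \<open>R\<close> with \<open>r ^ d < diam t \<cdot> R ^ (2d - 2)\<close>:
  then \<open>t(Fn b)\<close> is too small for the fixed point equation.\<close>
lemma fixed_point_small_diam_imp_type1:
  assumes t: "t \<in> berkA1 absv" and fixed: "phi_act P Q absv (Some t) = Some t"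
    and ram: "totally_ramified P Q absv (Some t)" and not_type1: "\<And>x. t \<noteq> (\<lambda>f. absv (poly f x))"
    and R: "1 \<le> R" "t [:0, 1:] \<le> R" "t Qn = R ^ (d - 1)" "R = 1 \<or> t [:0, 1:] = R"
    and small: "diam t < R"
  shows False
proof -
  define \<rho> where "\<rho> = diam t"
  have \<rho>: "0 < \<rho>" "\<And>a. \<rho> \<le> t (lin a)"
    unfolding \<rho>_def using diam_pos[OF t complete not_type1] diam_le[OF t] by auto
  have d: "2 \<le> d"
    by (rule deg_ge_2)
  have "\<rho> ^ d = \<rho> * \<rho> ^ (d - 1)"
    using d power_minus_mult[of d \<rho>] by (simp add: mult.commute)
  also have "\<dots> < \<rho> * R ^ (d - 1)"
    using \<rho>(1) small d unfolding \<rho>_def by (intro mult_strict_left_mono power_strict_mono) auto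
  also have "\<dots> \<le> \<rho> * R ^ (2 * d - 2)"
    using \<rho>(1) R(1) d by (intro mult_left_mono power_increasing) auto
  finally obtain r where r: "\<rho> < r" "r < R" "r ^ d < \<rho> * R ^ (2 * d - 2)"
    using exists_between_power_less[OF \<rho>(1)] d small unfolding \<rho>_def by (metis not_numeral_le_zero gr0I)
  obtain a where "t (lin a) < r"
    using r(1) diam_less_iff[OF t] unfolding \<rho>_def by blast
  then obtain b where key: "t (lin b) * (R ^ (d - 1) * R ^ d) \<le> max 1 (absv b) * r ^ d"
    using fixed_point_near_roots_bound[OF t fixed ram R] r(2) by blast
  have "(d - 1) + d = Suc (2 * d - 2)"
    using d by simp
  then have RR: "R ^ (d - 1) * R ^ d = R * R ^ (2 * d - 2)"
    by (metis power_add power_Suc)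
  show False
  proof (cases "absv b \<le> R")
    case True
    have "\<rho> * (R * R ^ (2 * d - 2)) \<le> t (lin b) * (R ^ (d - 1) * R ^ d)"
      unfolding RR using \<rho>(2)[of b] R(1) by (intro mult_right_mono) auto
    also have "\<dots> \<le> max 1 (absv b) * r ^ d"
      by (rule key)
    also have "\<dots> \<le> R * r ^ d"
      using True R(1) r(1) \<rho>(1) by (intro mult_right_mono) auto
    finally have "\<rho> * R ^ (2 * d - 2) \<le> r ^ d"
      using R(1) by (simp add: mult.left_commute)
    then show False
      using r(3) by simp
  next
    case False
    then have "t (lin b) = absv b"
      using berkA1_lin_far[OF t] R(2) by simp
    then have "R ^ (d - 1) * R ^ d \<le> r ^ d"
      using key False R(1) by (simp add: max_def)
    also have "\<dots> < R ^ d"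
      using r \<rho>(1) d by (intro power_strict_mono) auto
    also have "\<dots> \<le> R ^ (d - 1) * R ^ d"
      using R(1) by simp
    finally show False
      by simp
  qed
qed

text \<open>The remaining candidate is the Gauss point of the disk \<open>|T| \<le> R\<close>, \<open>R > 1\<close>. An annulus
  \<open>R/\<kappa> < |T| < R\<kappa>\<close> with \<open>\<kappa> ^ 2d < R ^ (d - 1)\<close> around it is too thin to hold all preimages.\<close>
lemma fixed_point_not_large_gauss_point:
  assumes t: "t \<in> berkA1 absv" and fixed: "phi_act P Q absv (Some t) = Some t"
    and ram: "totally_ramified P Q absv (Some t)"
    and R: "t [:0, 1:] = R" "1 < R" and large: "\<And>a. R \<le> t (lin a)"
  shows False
proof -
  have d: "2 \<le> d"
    by (rule deg_ge_2)
  have lin_eq: "t (lin x) = max R (absv x)" for x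
    using berkA1_lin_far[OF t, of x] berkA1_lin_le_max[OF t, of x 0] large[of x] R(1)
    by (cases "R < absv x") auto
  have "1 ^ (2 * d) < R ^ (d - 1)"
    using one_less_power[OF R(2), of "d - 1"] d by simp
  then obtain \<kappa> where \<kappa>: "1 < \<kappa>" "\<kappa> < R" "\<kappa> ^ (2 * d) < R ^ (d - 1)"
    using exists_between_power_less[of 1 "2 * d" "R ^ (d - 1)" R] d R(2) by auto
  let ?U = "Some ` {s \<in> berkA1 absv. R / \<kappa> < s [:0, 1:] \<and> s [:0, 1:] < R * \<kappa>}"
  have "openin (berkP1_top absv) ?U"
    by (rule openin_berkP1_Some[OF openin_berkA1_between])
  moreover have "Some t \<in> ?U"
    using t R \<kappa> by (simp add: divide_less_eq)
  ultimately obtain b rs where rs: "Fn b = smult (lead_coeff (Fn b)) (prod_list (map lin rs))"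
    "length rs = degree (Fn b)" "\<forall>x\<in>set rs. type1_pt absv x \<in> ?U" "None \<notin> ?U \<Longrightarrow> length rs = d"
    by (rule totally_ramified_preimages[OF ram]) blast
  have len: "length rs = d"
    using rs(4) by blast
  have roots: "R / \<kappa> < absv x \<and> absv x < R * \<kappa>" if "x \<in> set rs" for x
    using rs(3) that unfolding type1_pt_in_Some_iff by simp
  define l where "l = absv (lead_coeff (Fn b))"
  have "max 1 (absv b) * R ^ (d - 1) \<le> t (Fn b)"
    using fixed_point_eq[OF t fixed, of b] fixed_point_outside_unit_disk(2)[OF t fixed R] lin_eq[of b] R(2)
    by (simp add: mult_right_mono)
  also have "\<dots> \<le> l * (R * \<kappa>) ^ d"
    unfolding l_def using R(2) \<kappa>(1) roots
    by (intro berkA1_Fn_le[OF t rs(1) len]) (simp add: lin_eq less_imp_le)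
  also have "\<dots> = (l * (R / \<kappa>) ^ d) * \<kappa> ^ (2 * d)"
    using \<kappa>(1) by (simp add: power_mult_distrib power_divide mult_2 power_add)
  also have "\<dots> \<le> max 1 (absv b) * \<kappa> ^ (2 * d)"
  proof (intro mult_right_mono)
    have "(R / \<kappa>) ^ length rs \<le> (\<Prod>x\<leftarrow>rs. absv x)"
      using roots R(2) \<kappa>(1) by (intro power_le_prod_list_map) (auto intro: less_imp_le)
    then have "l * (R / \<kappa>) ^ d \<le> l * (\<Prod>x\<leftarrow>rs. absv x)"
      using len absv_nonneg unfolding l_def by (simp add: mult_left_mono)
    then show "l * (R / \<kappa>) ^ d \<le> max 1 (absv b)"
      using lead_coeff_mult_prod_roots_le[OF rs(1)] unfolding l_def by linarith
  qed simp
  finally have "R ^ (d - 1) \<le> \<kappa> ^ (2 * d)"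
    by (simp add: less_max_iff_disj)
  then show False
    using \<kappa>(3) by simp
qed

lemma fixed_point_totally_ramified_type1:
  assumes t: "t \<in> berkA1 absv" and fixed: "phi_act P Q absv (Some t) = Some t"
    and ram: "totally_ramified P Q absv (Some t)" and not_gauss: "t \<noteq> gauss_norm absv"
  shows "\<exists>x. t = (\<lambda>f. absv (poly f x))"
proof (rule ccontr)
  assume "\<not> (\<exists>x. t = (\<lambda>f. absv (poly f x)))"
  then have not_type1: "\<And>x. t \<noteq> (\<lambda>f. absv (poly f x))"
    by blast
  show False
  proof (cases "t [:0, 1:] \<le> 1")
    case True
    then obtain a where a: "absv a \<le> 1" "t (lin a) < 1"
      using berkA1_eq_gauss_norm[OF alg t] not_gauss by (meson not_le)
    then have "diam t < 1"
      using diam_less_iff[OF t] by blast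
    then show False
      using fixed_point_small_diam_imp_type1[OF t fixed ram not_type1, of 1] True
        fixed_point_in_unit_disk[OF t fixed a] by simp
  next
    case False
    define R where "R = t [:0, 1:]"
    then have R: "t [:0, 1:] = R" "1 < R"
      using False by simp_all
    show False
    proof (cases "diam t < R")
      case True
      then show False
        using fixed_point_small_diam_imp_type1[OF t fixed ram not_type1, of R] R
          fixed_point_outside_unit_disk(2)[OF t fixed R] by simp
    next
      case False
      then have "R \<le> t (lin a)" for a
        using diam_less_iff[OF t] by (meson not_le)
      then show False
        by (rule fixed_point_not_large_gauss_point[OF t fixed ram R])
    qed
  qed
qed

end

section \<open>Uniqueness in the direction of a totally ramified fixed point\<close>

context good_reduction_map
begin

lemma unique_fixed_point_in_unit_disk:
  assumes x0: "absv x0 \<le> 1" and fixed0: "phi_act P Q absv (type1_pt absv x0) = type1_pt absv x0"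
    and ram0: "totally_ramified P Q absv (type1_pt absv x0)"
    and t: "t \<in> berkA1 absv" and fixed: "phi_act P Q absv (Some t) = Some t"
    and near: "t (lin x0) < 1"
  shows "t = (\<lambda>f. absv (poly f x0))"
proof (rule ccontr)
  assume ne: "t \<noteq> (\<lambda>f. absv (poly f x0))"
  define s0 where "s0 = (\<lambda>f. absv (poly f x0))"
  have s0: "s0 \<in> berkA1 absv" "phi_act P Q absv (Some s0) = Some s0" "s0 (lin x0) < 1"
    using type1_in_berkA1 fixed0 by (simp_all add: s0_def type1_pt_def)
  define \<delta> where "\<delta> = t (lin x0)"
  have \<delta>: "0 < \<delta>" "\<delta> < 1"
    using berkA1_eq_type1_if_lin_zero[OF t] ne berkA1_nonneg[OF t, of "lin x0"] near
    unfolding \<delta>_def by force+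
  have "type1_pt absv x0 \<in> Some ` {s \<in> berkA1 absv. s (lin x0) < \<delta>}"
    using \<delta> type1_in_berkA1 by (simp add: type1_pt_def)
  then obtain b rs where rs: "Fn b = smult (lead_coeff (Fn b)) (prod_list (map lin rs))"
    "length rs = d" "\<And>x. x \<in> set rs \<Longrightarrow> absv (x - x0) < \<delta>"
    by (rule totally_ramified_roots_in_disk[OF ram0]) blast
  define l where "l = absv (lead_coeff (Fn b))"
  have "t (lin x) \<le> \<delta>" "s0 (lin x) \<le> \<delta>" if "x \<in> set rs" for x
    using berkA1_lin_le_max[OF t, of x x0] rs(3)[OF that] absv_minus_commute[of x0 x]
    unfolding \<delta>_def s0_def by simp_all
  then have "t (Fn b) \<le> l * \<delta> ^ d" "s0 (Fn b) \<le> l * \<delta> ^ d"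
    unfolding l_def by (intro berkA1_Fn_le[OF t rs(1,2)] berkA1_Fn_le[OF s0(1) rs(1,2)]; simp)+
  then have t_lin_b: "t (lin b) \<le> l * \<delta> ^ d" and x0_b: "absv (x0 - b) \<le> l * \<delta> ^ d"
    using fixed_point_eq[OF t fixed, of b] fixed_point_in_unit_disk[OF t fixed x0 near]
      fixed_point_eq[OF s0(1,2), of b] fixed_point_in_unit_disk[OF s0(1,2) x0 s0(3)]
    by (simp_all add: s0_def)
  have "\<delta> ^ d < \<delta>"
    using \<delta> deg_ge_2 power_strict_decreasing[of 1 d \<delta>] by simp
  show False
  proof (cases "absv b \<le> 1")
    case True
    then have "l \<le> 1"
      using lead_coeff_Fn_le[of b] unfolding l_def by simp
    then have "l * \<delta> ^ d \<le> \<delta> ^ d"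
      using \<delta> by (simp add: mult_left_le_one_le)
    then have "t (lin b) \<le> \<delta> ^ d" "absv (x0 - b) \<le> \<delta> ^ d"
      using t_lin_b x0_b by simp_all
    then have "\<delta> \<le> \<delta> ^ d"
      using berkA1_lin_le_max[OF t, of x0 b] absv_minus_commute[of x0 b] unfolding \<delta>_def by simp
    then show False
      using \<open>\<delta> ^ d < \<delta>\<close> by simp
  next
    case False
    have "absv b = t (lin b)"
      using berkA1_lin_far[OF t] berkA1_T_le_1_if_near[OF t x0 near] False by simp
    also have "\<dots> \<le> l * \<delta> ^ d"
      by (rule t_lin_b)
    also have "\<dots> \<le> absv b * \<delta> ^ d"
      using lead_coeff_Fn_le[of b] False \<delta> unfolding l_def by (intro mult_right_mono) auto
    also have "\<dots> < absv b"
      using False \<open>\<delta> ^ d < \<delta>\<close> \<delta> by simp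
    finally show False
      by simp
  qed
qed

text \<open>Evaluating \<open>Fn b\<close> at \<open>0\<close> and at \<open>x\<^sub>0\<close> bounds its leading coefficient
  from above and \<open>|x\<^sub>0 - b|\<close> by the radius of the cluster of roots.\<close>
lemma preimages_near_fixed_point_outside_unit_disk:
  assumes X: "1 < absv x0" and fixed0: "phi_act P Q absv (type1_pt absv x0) = type1_pt absv x0"
    and ram0: "totally_ramified P Q absv (type1_pt absv x0)" and \<epsilon>: "0 < \<epsilon>" "\<epsilon> \<le> 1"
  obtains b rs where "Fn b = smult (lead_coeff (Fn b)) (prod_list (map lin rs))" "length rs = d"
    "\<And>x. x \<in> set rs \<Longrightarrow> absv (x - x0) < \<epsilon>" "absv b = absv x0"
    "absv (lead_coeff (Fn b)) * absv x0 ^ (d - 1) \<le> 1"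
    "absv (x0 - b) * absv x0 ^ (d - 1) \<le> absv (lead_coeff (Fn b)) * \<epsilon> ^ d"
proof -
  define s0 where "s0 = (\<lambda>f. absv (poly f x0))"
  have s0: "s0 \<in> berkA1 absv" "phi_act P Q absv (Some s0) = Some s0" "s0 [:0, 1:] = absv x0"
    using type1_in_berkA1 fixed0 by (simp_all add: s0_def type1_pt_def)
  have "type1_pt absv x0 \<in> Some ` {s \<in> berkA1 absv. s (lin x0) < \<epsilon>}"
    using \<epsilon> type1_in_berkA1 by (simp add: type1_pt_def)
  then obtain b rs where rs: "Fn b = smult (lead_coeff (Fn b)) (prod_list (map lin rs))"
    "length rs = d" "\<And>x. x \<in> set rs \<Longrightarrow> absv (x - x0) < \<epsilon>"
    by (rule totally_ramified_roots_in_disk[OF ram0]) blast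
  define X l where "X = absv x0" and "l = absv (lead_coeff (Fn b))"
  have "absv x = X" if "x \<in> set rs" for x
    using absv_eq_if_close[of x x0] rs(3)[OF that] \<epsilon> X unfolding X_def by simp
  then have at_0: "l * X ^ d \<le> max 1 (absv b)"
    using lead_coeff_mult_prod_roots_le[OF rs(1)] rs(2) by (simp add: l_def prod_list_eq_power)
  have "s0 (Fn b) \<le> l * \<epsilon> ^ d"
    unfolding l_def using rs(3) absv_minus_commute
    by (intro berkA1_Fn_le[OF s0(1) rs(1,2)]) (simp add: s0_def less_imp_le)
  then have at_x0: "absv (x0 - b) * X ^ (d - 1) \<le> l * \<epsilon> ^ d"
    using fixed_point_eq[OF s0(1,2), of b] fixed_point_outside_unit_disk(2)[OF s0(1,2,3) X]
    unfolding X_def by (simp add: s0_def)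
  have X1: "1 < X ^ (d - 1)" "1 < X ^ d" "X ^ d = X * X ^ (d - 1)"
    using X deg_ge_2 one_less_power[of X] power_minus_mult[of d X] unfolding X_def
    by (simp_all add: mult.commute)
  have "absv b = X"
  proof (rule ccontr)
    assume "absv b \<noteq> X"
    then have big: "max 1 (absv b) \<le> absv (x0 - b)"
      using absv_diff_eq_max[of x0 b] X unfolding X_def by simp
    have "absv (x0 - b) * (X ^ (d - 1) * X ^ d) = (absv (x0 - b) * X ^ (d - 1)) * X ^ d"
      by (simp add: mult.assoc)
    also have "\<dots> \<le> (l * \<epsilon> ^ d) * X ^ d"
      using at_x0 X1(2) by (intro mult_right_mono) simp_all
    also have "\<dots> = (l * X ^ d) * \<epsilon> ^ d"
      by (simp add: mult_ac)
    also have "\<dots> \<le> max 1 (absv b) * 1"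
      using at_0 \<epsilon> by (intro mult_mono) (auto simp: power_le_one l_def absv_nonneg)
    also have "\<dots> \<le> absv (x0 - b) * 1"
      using big by simp
    finally have "X ^ (d - 1) * X ^ d \<le> 1"
      using big by (simp add: mult_le_cancel_left_pos)
    moreover have "1 < X ^ (d - 1) * X ^ d"
      using X1 by (simp add: less_1_mult)
    ultimately show False
      by simp
  qed
  then have "l * X ^ (d - 1) \<le> 1"
    using at_0 X1 X unfolding X_def by (simp add: mult.left_commute)
  with rs at_x0 \<open>absv b = X\<close> show ?thesis
    using that unfolding l_def X_def by blast
qed

lemma infinity_not_fixed_if_fixed_point_outside_unit_disk:
  assumes X: "1 < absv x0" and fixed0: "phi_act P Q absv (type1_pt absv x0) = type1_pt absv x0"
    and ram0: "totally_ramified P Q absv (type1_pt absv x0)"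
  shows "phi_act P Q absv None \<noteq> None"
proof
  assume "phi_act P Q absv None = None"
  then have deg: "degree Q < degree P"
    by (simp add: phi_act_None_eq_None_iff)
  have "(\<lambda>f. absv (poly f x0)) \<in> berkA1 absv"
    "phi_act P Q absv (Some (\<lambda>f. absv (poly f x0))) = Some (\<lambda>f. absv (poly f x0))"
    using type1_in_berkA1 fixed0 by (simp_all add: type1_pt_def)
  from fixed_point_outside_unit_disk(1)[OF this _ X] have "absv (coeff Pn d) = 1"
    by simp
  obtain b rs where "absv (lead_coeff (Fn b)) * absv x0 ^ (d - 1) \<le> 1"
    by (rule preimages_near_fixed_point_outside_unit_disk[OF X fixed0 ram0, of 1]) auto
  then have "absv x0 ^ (d - 1) \<le> 1"
    using lead_coeff_Fn_if_infinity_fixed(2)[OF deg \<open>absv (coeff Pn d) = 1\<close>] by simp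
  moreover have "1 < absv x0 ^ (d - 1)"
    using one_less_power[OF X, of "d - 1"] deg_ge_2 by simp
  ultimately show False
    by simp
qed

text \<open>When \<open>\<infinity>\<close> is a totally ramified fixed point, all \<open>d\<close> preimages of some \<open>b\<close> lie in
  \<open>|T| > t(T) + 1\<close>; then \<open>t(Fn b) = \<Prod>|r| \<le> |b|\<close>, against \<open>t(Fn b) = |b| t(T) ^ (d - 1)\<close>.\<close>
lemma no_fixed_point_near_fixed_infinity:
  assumes fixed_inf: "phi_act P Q absv None = None" and ram_inf: "totally_ramified P Q absv None"
    and t: "t \<in> berkA1 absv" and fixed: "phi_act P Q absv (Some t) = Some t"
    and R: "t [:0, 1:] = R" "1 < R"
  shows False
proof -
  have deg: "degree Q < degree P"
    using fixed_inf by (simp add: phi_act_None_eq_None_iff)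
  note Fn = lead_coeff_Fn_if_infinity_fixed[OF deg fixed_point_outside_unit_disk(1)[OF t fixed R]]
  let ?U = "insert None (Some ` {s \<in> berkA1 absv. R + 1 < s [:0, 1:]})"
  obtain b rs where rs: "Fn b = smult (lead_coeff (Fn b)) (prod_list (map lin rs))"
    "length rs = degree (Fn b)" "\<forall>x\<in>set rs. type1_pt absv x \<in> ?U"
    by (rule totally_ramified_preimages[OF ram_inf openin_berkP1_near_infinity]) auto
  have len: "length rs = d"
    using rs(2) Fn(1) by simp
  have roots: "R + 1 < absv x" if "x \<in> set rs" for x
    using rs(3) that by (auto simp: type1_pt_def)
  define N where "N = (\<Prod>x\<leftarrow>rs. absv x)"
  have lin_roots: "t (lin x) = absv x" if "x \<in> set rs" for x
    using berkA1_lin_far[OF t, of x] roots[OF that] R(1) by simp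
  have "t (Fn b) = N"
    using arg_cong[OF rs(1), of t] Fn(2) unfolding N_def berkA1_prod_lin[OF t]
    by (simp add: lin_roots cong: map_cong)
  moreover have "R + 1 \<le> N"
  proof -
    have "(R + 1) ^ 1 \<le> (R + 1) ^ length rs"
      using len deg_ge_2 R(2) by (intro power_increasing) auto
    also have "\<dots> \<le> N"
      unfolding N_def using roots R(2) by (intro power_le_prod_list_map) (auto intro: less_imp_le)
    finally show ?thesis
      by simp
  qed
  moreover have "N \<le> max 1 (absv b)"
    using lead_coeff_mult_prod_roots_le[OF rs(1)] Fn(2) by (simp add: N_def)
  ultimately have b: "R < absv b" "N \<le> absv b"
    using R(2) by (auto simp: max_def split: if_splits)
  have "t (Fn b) = absv b * R ^ (d - 1)"
    using fixed_point_eq[OF t fixed, of b] fixed_point_outside_unit_disk(2)[OF t fixed R]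
      berkA1_lin_far[OF t] R(1) b(1) by simp
  moreover have "absv b < absv b * R ^ (d - 1)"
    using one_less_power[OF R(2), of "d - 1"] deg_ge_2 b(1) R(2) by simp
  ultimately show False
    using \<open>t (Fn b) = N\<close> b(2) by simp
qed

lemma fixed_points_outside_unit_disk_bounds:
  assumes X: "1 < absv x0" and fixed0: "phi_act P Q absv (type1_pt absv x0) = type1_pt absv x0"
    and ram0: "totally_ramified P Q absv (type1_pt absv x0)"
    and t: "t \<in> berkA1 absv" and fixed: "phi_act P Q absv (Some t) = Some t"
    and R: "t [:0, 1:] = R" "1 < R" and \<delta>: "0 < t (lin x0)"
  obtains b where "t (lin b) * R ^ (d - 1) * absv x0 ^ (d - 1) \<le> t (lin x0) ^ d"
    "absv (x0 - b) * absv x0 ^ (d - 1) * absv x0 ^ (d - 1) \<le> min (t (lin x0)) 1"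
proof -
  define \<delta> \<epsilon> X where "\<delta> = t (lin x0)" and "\<epsilon> = min (t (lin x0)) 1" and "X = absv x0"
  have \<epsilon>: "0 < \<epsilon>" "\<epsilon> \<le> 1" "\<epsilon> \<le> \<delta>"
    using \<delta> by (auto simp: \<epsilon>_def \<delta>_def)
  obtain b rs where rs: "Fn b = smult (lead_coeff (Fn b)) (prod_list (map lin rs))" "length rs = d"
    "\<And>x. x \<in> set rs \<Longrightarrow> absv (x - x0) < \<epsilon>"
    and l: "absv (lead_coeff (Fn b)) * X ^ (d - 1) \<le> 1"
    and at_x0: "absv (x0 - b) * X ^ (d - 1) \<le> absv (lead_coeff (Fn b)) * \<epsilon> ^ d"
    unfolding X_def by (rule preimages_near_fixed_point_outside_unit_disk[OF X fixed0 ram0 \<epsilon>(1,2)]) blast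
  define l where "l = absv (lead_coeff (Fn b))"
  have l0: "0 \<le> l"
    by (simp add: l_def absv_nonneg)
  have "t (lin x) \<le> \<delta>" if "x \<in> set rs" for x
    using berkA1_lin_le_max[OF t, of x x0] rs(3)[OF that] \<epsilon>(3) unfolding \<delta>_def by simp
  then have at_t: "t (lin b) * R ^ (d - 1) \<le> l * \<delta> ^ d"
    using berkA1_Fn_le[OF t rs(1,2)] fixed_point_eq[OF t fixed, of b]
      fixed_point_outside_unit_disk(2)[OF t fixed R] unfolding l_def by simp
  have X1: "0 \<le> X ^ (d - 1)"
    by (simp add: X_def absv_nonneg)
  have "t (lin b) * R ^ (d - 1) * X ^ (d - 1) \<le> (l * \<delta> ^ d) * X ^ (d - 1)"
    using at_t X1 by (rule mult_right_mono)
  also have "\<dots> = (l * X ^ (d - 1)) * \<delta> ^ d"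
    by (simp only: mult_ac)
  also have "\<dots> \<le> \<delta> ^ d"
    using l l0 \<delta> X1 unfolding l_def \<delta>_def by (intro mult_left_le_one_le) auto
  finally have bound_t: "t (lin b) * R ^ (d - 1) * X ^ (d - 1) \<le> \<delta> ^ d" .
  have "absv (x0 - b) * X ^ (d - 1) * X ^ (d - 1) \<le> (l * \<epsilon> ^ d) * X ^ (d - 1)"
    using at_x0 X1 unfolding l_def by (rule mult_right_mono)
  also have "\<dots> = (l * X ^ (d - 1)) * \<epsilon> ^ d"
    by (simp only: mult_ac)
  also have "\<dots> \<le> \<epsilon> ^ d"
    using l l0 \<epsilon> X1 unfolding l_def by (intro mult_left_le_one_le) auto
  also have "\<dots> \<le> \<epsilon>"
    using \<epsilon> deg_ge_2 power_decreasing[of 1 d \<epsilon>] by simp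
  finally show ?thesis
    using that bound_t unfolding \<delta>_def \<epsilon>_def X_def by blast
qed

text \<open>Compare \<open>t\<close> with the fixed point \<open>x\<^sub>0\<close> through \<open>\<delta> = t(T - x\<^sub>0) \<le> max (t(T - b)) |x\<^sub>0 - b|\<close>:
  either bound on \<open>\<delta>\<close> is too small for one of the two fixed point equations.\<close>
lemma unique_fixed_point_outside_unit_disk:
  assumes X: "1 < absv x0" and fixed0: "phi_act P Q absv (type1_pt absv x0) = type1_pt absv x0"
    and ram0: "totally_ramified P Q absv (type1_pt absv x0)"
    and t: "t \<in> berkA1 absv" and fixed: "phi_act P Q absv (Some t) = Some t"
    and R: "t [:0, 1:] = R" "1 < R"
  shows "t = (\<lambda>f. absv (poly f x0))"
proof (rule ccontr)
  assume ne: "t \<noteq> (\<lambda>f. absv (poly f x0))"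
  define \<delta> X where "\<delta> = t (lin x0)" and "X = absv x0"
  have \<delta>: "0 < \<delta>"
    using berkA1_eq_type1_if_lin_zero[OF t] ne berkA1_nonneg[OF t, of "lin x0"]
    unfolding \<delta>_def by force
  obtain b where at_t: "t (lin b) * R ^ (d - 1) * X ^ (d - 1) \<le> \<delta> ^ d"
    and at_x0: "absv (x0 - b) * X ^ (d - 1) * X ^ (d - 1) \<le> min \<delta> 1"
    using fixed_points_outside_unit_disk_bounds[OF X fixed0 ram0 t fixed R] \<delta>
    unfolding \<delta>_def X_def by blast
  have X1: "1 < X ^ (d - 1)"
    using one_less_power[of X "d - 1"] X deg_ge_2 unfolding X_def by simp
  have "\<delta> \<le> max (t (lin b)) (absv (x0 - b))"
    using berkA1_lin_le_max[OF t, of x0 b] unfolding \<delta>_def by simp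
  then consider "\<delta> \<le> t (lin b)" | "\<delta> \<le> absv (x0 - b)"
    by linarith
  then show False
  proof cases
    case 1
    have "\<delta> * (R * X) ^ (d - 1) \<le> t (lin b) * R ^ (d - 1) * X ^ (d - 1)"
      using 1 R(2) X1 by (simp add: power_mult_distrib mult.assoc mult_right_mono)
    also have "\<dots> \<le> \<delta> * \<delta> ^ (d - 1)"
      using at_t power_minus_mult[of d \<delta>] deg_ge_2 by (simp add: mult.commute)
    finally have "(R * X) ^ (d - 1) \<le> \<delta> ^ (d - 1)"
      using \<delta> by (simp only: mult_le_cancel_left_pos)
    then have "R * X \<le> \<delta>"
      using power_mono_iff[of "R * X" \<delta> "d - 1"] \<delta> R(2) X deg_ge_2 unfolding X_def by simp
    moreover have "\<delta> \<le> max R X"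
      using berkA1_lin_le_max[OF t, of x0 0] R(1) unfolding \<delta>_def X_def by simp
    moreover have "max R X < R * X"
      using R(2) X unfolding X_def by (simp add: max_def)
    ultimately show False
      by simp
  next
    case 2
    have "\<delta> * (X ^ (d - 1) * X ^ (d - 1)) \<le> absv (x0 - b) * X ^ (d - 1) * X ^ (d - 1)"
      using 2 X1 by (simp add: mult.assoc mult_right_mono)
    also have "\<dots> \<le> \<delta> * 1"
      using at_x0 by simp
    finally have "X ^ (d - 1) * X ^ (d - 1) \<le> 1"
      using \<delta> by (simp only: mult_le_cancel_left_pos)
    then show False
      using less_1_mult[OF X1 X1] by simp
  qed
qed

lemma totally_ramified_fixed_point_is_type1:
  assumes "\<xi> \<in> berkP1 absv" "\<xi> \<noteq> gauss_pt absv"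
    and "phi_act P Q absv \<xi> = \<xi>" "totally_ramified P Q absv \<xi>"
  shows "is_type1 absv \<xi>"
proof (cases \<xi>)
  case (Some t)
  then have "t \<in> berkA1 absv" "t \<noteq> gauss_norm absv"
    using assms(1,2) by (auto simp: berkP1_def gauss_pt_eq)
  then obtain x where "t = (\<lambda>f. absv (poly f x))"
    using fixed_point_totally_ramified_type1 assms(3,4) Some by blast
  then show ?thesis
    unfolding is_type1_def type1_pt_def using Some by blast
qed (simp add: is_type1_def)

lemma totally_ramified_fixed_point_unique_in_direction:
  assumes type1: "is_type1 absv \<xi>" and fixed: "phi_act P Q absv \<xi> = \<xi>"
    and ram: "totally_ramified P Q absv \<xi>"
    and \<eta>: "\<eta> \<in> dir_disk absv (gauss_pt absv) \<xi>" and fixed_\<eta>: "phi_act P Q absv \<eta> = \<eta>"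
  shows "\<eta> = \<xi>"
proof -
  have Some_near_infinity: "\<exists>t. \<eta> = Some t \<and> t \<in> berkA1 absv \<and> 1 < t [:0, 1:]"
    if "\<eta> \<in> outer_disk" "\<eta> \<noteq> None"
    using that by (auto simp: outer_disk_def)
  consider "\<xi> = None" | x0 where "\<xi> = type1_pt absv x0"
    using type1 unfolding is_type1_def by blast
  then show ?thesis
  proof cases
    case 1
    then have "\<eta> \<in> outer_disk"
      using dir_disk_subset_outer_disk[of \<xi>] \<eta> by (auto simp: outer_disk_def)
    then show ?thesis
      using Some_near_infinity no_fixed_point_near_fixed_infinity fixed ram fixed_\<eta> 1 by fastforce
  next
    case (2 x0)
    show ?thesis
    proof (cases "absv x0 \<le> 1")
      case True
      have "\<xi> \<in> open_unit_disk x0"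
        using 2 type1_in_berkA1 by (simp add: open_unit_disk_def type1_pt_def)
      then obtain t where "\<eta> = Some t" "t \<in> berkA1 absv" "t (lin x0) < 1"
        using dir_disk_subset_open_unit_disk[OF True] \<eta> by (auto simp: open_unit_disk_def)
      then show ?thesis
        using unique_fixed_point_in_unit_disk[OF True] fixed ram fixed_\<eta> 2 by (simp add: type1_pt_def)
    next
      case False
      then have X: "1 < absv x0"
        by simp
      have "\<xi> \<in> outer_disk"
        using 2 X type1_in_berkA1 by (simp add: outer_disk_def type1_pt_def)
      then have "\<eta> \<in> outer_disk"
        using dir_disk_subset_outer_disk \<eta> by blast
      moreover have "\<eta> \<noteq> None"
      proof
        assume "\<eta> = None"
        then show False
          using infinity_not_fixed_if_fixed_point_outside_unit_disk[OF X] fixed ram fixed_\<eta> 2 by simp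
      qed
      ultimately obtain t where "\<eta> = Some t" "t \<in> berkA1 absv" "1 < t [:0, 1:]"
        using Some_near_infinity by blast
      then show ?thesis
        using unique_fixed_point_outside_unit_disk[OF X] fixed ram fixed_\<eta> 2 by (simp add: type1_pt_def)
    qed
  qed
qed

end

theorem lemma3p9:
  fixes absv :: "'a::field_char_0 \<Rightarrow> real"
    and P Q :: "'a poly"
    and \<xi> :: "'a seminorm option"
  assumes "CANA_field absv"
    and "coprime P Q"
    and "rdeg P Q \<ge> 2"
    and "good_reduction absv P Q"
    and "\<xi> \<in> berkP1 absv"
    and "\<xi> \<noteq> gauss_pt absv"
    and "phi_act P Q absv \<xi> = \<xi>"
    and "totally_ramified P Q absv \<xi>"
  shows "is_type1 absv \<xi> \<and>
         (\<forall>\<eta>\<in>dir_disk absv (gauss_pt absv) \<xi>. phi_act P Q absv \<eta> = \<eta> \<longrightarrow> \<eta> = \<xi>)"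
proof -
  obtain c where "c \<noteq> 0" "normalized_form absv (smult c P) (smult c Q)"
    "\<forall>x y. max (absv x) (absv y) = 1 \<longrightarrow>
       max (absv (hom_eval (smult c P) (rdeg P Q) x y)) (absv (hom_eval (smult c Q) (rdeg P Q) x y)) = 1"
    using assms(4) unfolding good_reduction_def by blast
  then interpret good_reduction_map absv P Q c
    using assms(1-3) by unfold_locales (auto simp: CANA_field_def)
  have "is_type1 absv \<xi>"
    using totally_ramified_fixed_point_is_type1 assms(5-8) .
  then show ?thesis
    using totally_ramified_fixed_point_unique_in_direction assms(7,8) by blast
qed

end
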